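(* Let $M$ be a compact connected $1$-manifold and let $G$ be a group acting by homeomorphisms of $M$, generated by a finite symmetric set $\mathcal{G}$, and assume $G$ has subexponential growth, i.e. $\lim_{n\to\infty}\frac{1}{n}\log|B(n)| = 0$ where $B(n)$ is the set of elements of word length at most $n$ with respect to $\mathcal{G}$. Then for every $\varepsilon>0$ there is a homeomorphism $h$ of $M$ such that $hgh^{-1}$ is Lipschitz with Lipschitz constant at most $e^{\varepsilon}$ for every $g\in\mathcal{G}$. In particular, for every homeomorphism $f$ of the circle and every $\varepsilon>0$, $f$ is topologically conjugate to a Lipschitz homeomorphism with Lipschitz constant at most $e^{\varepsilon}$, and consequently the topological entropy of every circle homeomorphism is zero.
   Context: Word length $\|f\|$ of $f\in G$ with respect to $\mathcal{G}$: the minimal number of factors from $\mathcal{G}$ needed to write $f$. *)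

theory Defs
  imports "HOL-Analysis.Analysis" "HOL-Algebra.Group" "HOL-Algebra.Generated_Groups"
begin

text \<open>Models of compact connected 1-manifolds with their standard length metric:
  the unit interval and the unit circle (as subsets of the complex plane).\<close>

definition unit_interval_c :: "complex set" where
  "unit_interval_c = complex_of_real ` {0..1}"

definition circle :: "complex set" where
  "circle = sphere 0 1"

definition circ_dist :: "complex \<Rightarrow> complex \<Rightarrow> real" where
  "circ_dist z w = \<bar>Arg (z / w)\<bar>"

definition cc_one_manifold :: "complex set \<Rightarrow> (complex \<Rightarrow> complex \<Rightarrow> real) \<Rightarrow> bool" where
  "cc_one_manifold M d \<longleftrightarrow> (M = unit_interval_c \<and> d = dist) \<or> (M = circle \<and> d = circ_dist)"

definition lipschitz_wrt :: "('a \<Rightarrow> 'a \<Rightarrow> real) \<Rightarrow> 'a set \<Rightarrow> real \<Rightarrow> ('a \<Rightarrow> 'a) \<Rightarrow> bool" where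
  "lipschitz_wrt d M L f \<longleftrightarrow> (\<forall>x\<in>M. \<forall>y\<in>M. d (f x) (f y) \<le> L * d x y)"

definition word_length :: "('g, 'b) monoid_scheme \<Rightarrow> 'g set \<Rightarrow> 'g \<Rightarrow> nat" where
  "word_length G S g = (LEAST n. \<exists>ws. set ws \<subseteq> S \<and> length ws = n \<and> foldr (\<otimes>\<^bsub>G\<^esub>) ws \<one>\<^bsub>G\<^esub> = g)"

definition word_ball :: "('g, 'b) monoid_scheme \<Rightarrow> 'g set \<Rightarrow> nat \<Rightarrow> 'g set" where
  "word_ball G S n = {g \<in> carrier G. word_length G S g \<le> n}"

definition separated_set ::
  "('a \<Rightarrow> 'a \<Rightarrow> real) \<Rightarrow> 'a set \<Rightarrow> ('a \<Rightarrow> 'a) \<Rightarrow> nat \<Rightarrow> real \<Rightarrow> 'a set \<Rightarrow> bool" where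
  "separated_set d X f n e S \<longleftrightarrow> S \<subseteq> X \<and> finite S \<and>
     (\<forall>x\<in>S. \<forall>y\<in>S. x \<noteq> y \<longrightarrow> (\<exists>k<n. d ((f ^^ k) x) ((f ^^ k) y) > e))"

definition max_separated :: "('a \<Rightarrow> 'a \<Rightarrow> real) \<Rightarrow> 'a set \<Rightarrow> ('a \<Rightarrow> 'a) \<Rightarrow> nat \<Rightarrow> real \<Rightarrow> nat" where
  "max_separated d X f n e = (GREATEST k. \<exists>S. separated_set d X f n e S \<and> card S = k)"

definition top_entropy :: "('a \<Rightarrow> 'a \<Rightarrow> real) \<Rightarrow> 'a set \<Rightarrow> ('a \<Rightarrow> 'a) \<Rightarrow> ereal" where
  "top_entropy d X f =
     (SUP e\<in>{0<..}. limsup (\<lambda>n. ereal (ln (real (max_separated d X f n e)) / real n)))"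

end

theory Submission
  imports Defs
begin

text \<open>Fix \<open>\<epsilon> > 0\<close> and give each group element \<open>g\<close> the weight \<open>exp (- \<epsilon> |g|)\<close>, where \<open>|g|\<close> is
  the word length; subexponential growth makes these weights summable. Averaging the push-forwards
  of arc length under all \<open>\<rho> g\<close> with these weights gives a finite measure \<open>\<mu>\<close> on \<open>M\<close> without atoms
  that charges every arc, and since left multiplication by a generator changes word lengths by at
  most one, \<open>\<mu> (\<rho> s K) \<le> e\<^sup>\<epsilon> \<mu> K\<close>. The homeomorphism \<open>h\<close> given by the normalised distribution
  function of \<open>\<mu>\<close> turns \<open>\<mu>\<close> into arc length, so every \<open>h \<circ> \<rho> s \<circ> h\<^sup>-\<^sup>1\<close> stretches arcs, and
  hence distances, by at most \<open>e\<^sup>\<epsilon>\<close>. A circle homeomorphism \<open>f\<close> is the case of \<open>\<int>\<close>, with weights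
  \<open>exp (- \<epsilon> |n|)\<close>. Finally, a map that is \<open>e\<^sup>\<epsilon>\<close>-Lipschitz after conjugation has at most
  \<open>C e\<^sup>\<epsilon>\<^sup>n\<close> points that are \<open>(n, \<delta>)\<close>-separated, so its entropy is at most \<open>\<epsilon>\<close> for every \<open>\<epsilon> > 0\<close>.\<close>

section \<open>Averaged push-forwards of arc length\<close>

definition param_preimage :: "(real \<Rightarrow> complex) \<Rightarrow> (complex \<Rightarrow> complex) \<Rightarrow> complex set \<Rightarrow> real set" where
  "param_preimage \<gamma> r X = {t\<in>{0..1}. r (\<gamma> t) \<in> X}"

definition pushforward_length :: "(real \<Rightarrow> complex) \<Rightarrow> (complex \<Rightarrow> complex) \<Rightarrow> complex set \<Rightarrow> real" where
  "pushforward_length \<gamma> r X = measure lebesgue (param_preimage \<gamma> r X)"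

lemma param_preimage_compact:
  assumes "continuous_on {0..1} (r \<circ> \<gamma>)" "closed X"
  shows "compact (param_preimage \<gamma> r X)"
proof -
  have "closed ({0..1} \<inter> (r \<circ> \<gamma>) -` X)"
    by (rule continuous_closed_preimage[OF assms(1)]) (use assms in auto)
  moreover have "param_preimage \<gamma> r X = {0..1} \<inter> (r \<circ> \<gamma>) -` X"
    by (auto simp: param_preimage_def)
  ultimately show ?thesis
    by (metis bounded_Int bounded_closed_interval compact_eq_bounded_closed)
qed

lemma param_preimage_mono: "X \<subseteq> Y \<Longrightarrow> param_preimage \<gamma> r X \<subseteq> param_preimage \<gamma> r Y"
  by (auto simp: param_preimage_def)

lemma pushforward_length_nonneg: "0 \<le> pushforward_length \<gamma> r X"
  by (simp add: pushforward_length_def)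

lemma infsum_split_finite:
  fixes g :: "'i \<Rightarrow> real"
  assumes "g summable_on I" "finite F" "F \<subseteq> I"
  shows "infsum g I = sum g F + infsum g (I - F)"
proof -
  have "infsum g I = infsum g (F \<union> (I - F))"
    using assms by (simp add: Un_absorb1)
  also have "\<dots> = infsum g F + infsum g (I - F)"
    by (rule infsum_Un_disjoint) (use assms summable_on_subset[OF assms(1), of "I - F"] in auto)
  finally show ?thesis using assms by simp
qed

text \<open>Arc length on the interval and on the circle, seen through a parametrization by \<open>[0,1]\<close>; the
  finite exceptions in \<open>arc_preimage\<close> account for the identified endpoints of the circle.\<close>

locale arc_parametrization =
  fixes \<gamma> :: "real \<Rightarrow> complex" and M :: "complex set"
  assumes param_cont: "continuous_on {0..1} \<gamma>" and param_image: "\<gamma> ` {0..1} = M"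
    and finite_fibres: "\<And>z. finite {t\<in>{0..1}. \<gamma> t = z}"
    and arc_preimage: "\<And>a b. 0 \<le> a \<Longrightarrow> a \<le> b \<Longrightarrow> b \<le> 1 \<Longrightarrow>
                 \<exists>F. finite F \<and> {t\<in>{0..1}. \<gamma> t \<in> \<gamma>`{a..b}} \<subseteq> {a..b} \<union> F"
    and preimage_ball_small: "\<And>\<eta>. \<eta> > 0 \<Longrightarrow>
                 \<exists>\<delta>>0. \<forall>c. measure lebesgue {t\<in>{0..1}. \<gamma> t \<in> cball c \<delta>} \<le> \<eta>"
begin

lemma compact_M: "compact M"
  using param_image param_cont compact_continuous_image by blast

lemma closed_arc: "0 \<le> a \<Longrightarrow> b \<le> 1 \<Longrightarrow> closed (\<gamma>`{a..b})"
  using param_cont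
  by (auto intro!: compact_imp_closed compact_continuous_image elim: continuous_on_subset)

lemma finite_arc_overlap:
  assumes "0 \<le> a" "a \<le> b" "b \<le> 1" "0 \<le> c" "c \<le> d" "d \<le> 1" "b \<le> c \<or> d \<le> a"
  shows "finite (\<gamma>`{a..b} \<inter> \<gamma>`{c..d})"
proof -
  obtain F where F: "finite F" "{t\<in>{0..1}. \<gamma> t \<in> \<gamma>`{a..b}} \<subseteq> {a..b} \<union> F"
    using arc_preimage assms by blast
  have "\<gamma>`{a..b} \<inter> \<gamma>`{c..d} \<subseteq> \<gamma>`({a, b} \<union> F)"
  proof
    fix z assume z: "z \<in> \<gamma>`{a..b} \<inter> \<gamma>`{c..d}"
    then obtain s where s: "s \<in> {c..d}" "z = \<gamma> s" by blast
    have "s \<in> {0..1}" using s(1) assms(4,6) by auto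
    moreover have "\<gamma> s \<in> \<gamma>`{a..b}" using z s(2) by (metis IntD1)
    ultimately have "s \<in> {a..b} \<union> F" using F(2) by blast
    then have "s \<in> {a, b} \<union> F" using s(1) assms(7) by auto
    then show "z \<in> \<gamma>`({a, b} \<union> F)" using s(2) by blast
  qed
  then show ?thesis by (rule finite_subset) (use F in auto)
qed

lemma measure_param_preimage_arc:
  assumes "0 \<le> a" "a \<le> b" "b \<le> 1"
  shows "measure lebesgue (param_preimage \<gamma> id (\<gamma>`{a..b})) = b - a"
proof -
  obtain F where F: "finite F" "{t\<in>{0..1}. \<gamma> t \<in> \<gamma>`{a..b}} \<subseteq> {a..b} \<union> F"
    using arc_preimage assms by blast
  let ?P = "param_preimage \<gamma> id (\<gamma>`{a..b})"
  have P: "?P = {t\<in>{0..1}. \<gamma> t \<in> \<gamma>`{a..b}}" by (simp add: param_preimage_def)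
  have "compact ?P"
    by (rule param_preimage_compact) (use param_cont assms closed_arc in auto)
  then have P_lm: "?P \<in> lmeasurable" by (rule lmeasurable_compact)
  have "b - a = measure lebesgue {a..b}" using assms by simp
  also have "\<dots> \<le> measure lebesgue ?P"
    by (rule measure_mono_fmeasurable) (use P_lm assms in \<open>auto simp: P\<close>)
  finally have lower: "b - a \<le> measure lebesgue ?P" .
  have F_lm: "F \<in> lmeasurable" by (simp add: F finite_imp_compact lmeasurable_compact)
  have "measure lebesgue ?P \<le> measure lebesgue ({a..b} \<union> F)"
    by (rule measure_mono_fmeasurable[OF _ fmeasurableD[OF P_lm] fmeasurable.Un[OF _ F_lm]])
       (use F P in auto)
  also have "\<dots> = measure lebesgue {a..b}"
    by (rule measure_Un_null_set) (use F negligible_finite negligible_iff_null_sets in auto)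
  also have "\<dots> = b - a" using assms by simp
  finally show ?thesis using lower by linarith
qed

end

text \<open>For a group action with weights \<open>exp (- \<epsilon> * word length)\<close> every generator shifts the family
  with \<open>e = \<epsilon>\<close>; this is what makes the averaged measure \<open>exp e\<close>-quasi-invariant under \<open>T\<close>.\<close>

definition shifts_weighted_family ::
  "'i set \<Rightarrow> ('i \<Rightarrow> real) \<Rightarrow> ('i \<Rightarrow> 'a \<Rightarrow> 'a) \<Rightarrow> 'a set \<Rightarrow> real \<Rightarrow> ('a \<Rightarrow> 'a) \<Rightarrow> bool" where
  "shifts_weighted_family I w \<rho> M e T \<longleftrightarrow>
     (\<exists>\<sigma>. bij_betw \<sigma> I I \<and> (\<forall>i\<in>I. \<forall>x\<in>M. T (\<rho> (\<sigma> i) x) = \<rho> i x) \<and> (\<forall>i\<in>I. w i \<le> exp e * w (\<sigma> i)))"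

text \<open>\<open>mu\<close> is only used on closed sets, where it is additive up to finite overlaps. The index \<open>i0\<close>,
  at which the family is the identity, makes \<open>mu\<close> charge every arc.\<close>

locale averaged_pushforward = arc_parametrization +
  fixes I :: "'i set" and w :: "'i \<Rightarrow> real" and \<rho> \<rho>' :: "'i \<Rightarrow> complex \<Rightarrow> complex" and i0 :: 'i
  assumes homeo: "\<And>i. i\<in>I \<Longrightarrow> homeomorphism M M (\<rho> i) (\<rho>' i)"
    and weight_nonneg: "\<And>i. i\<in>I \<Longrightarrow> 0 \<le> w i" and weight_summable: "w summable_on I"
    and i0_in: "i0 \<in> I" and weight_i0: "w i0 > 0" and \<rho>_i0: "\<And>x. x\<in>M \<Longrightarrow> \<rho> i0 x = x"
begin

definition mu :: "complex set \<Rightarrow> real" where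
  "mu X = (\<Sum>\<^sub>\<infinity>i\<in>I. w i * pushforward_length \<gamma> (\<rho> i) X)"

lemma continuous_on_action_param: "i\<in>I \<Longrightarrow> continuous_on {0..1} (\<rho> i \<circ> \<gamma>)"
  by (metis param_cont param_image continuous_on_compose homeo homeomorphism_cont1)

lemma param_preimage_lmeasurable: "i\<in>I \<Longrightarrow> closed X \<Longrightarrow> param_preimage \<gamma> (\<rho> i) X \<in> lmeasurable"
  using param_preimage_compact continuous_on_action_param lmeasurable_compact by blast

lemma pushforward_length_le_1: "i\<in>I \<Longrightarrow> closed X \<Longrightarrow> pushforward_length \<gamma> (\<rho> i) X \<le> 1"
proof -
  assume "i\<in>I" "closed X"
  then have "pushforward_length \<gamma> (\<rho> i) X \<le> measure lebesgue {0..1::real}"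
    unfolding pushforward_length_def
    by (intro measure_mono_fmeasurable) (auto simp: param_preimage_def dest: param_preimage_lmeasurable)
  then show ?thesis by simp
qed

lemma pushforward_length_mono:
  "i\<in>I \<Longrightarrow> closed Y \<Longrightarrow> X \<subseteq> Y \<Longrightarrow> closed X \<Longrightarrow> pushforward_length \<gamma> (\<rho> i) X \<le> pushforward_length \<gamma> (\<rho> i) Y"
  unfolding pushforward_length_def
  by (rule measure_mono_fmeasurable[OF param_preimage_mono])
     (auto intro: param_preimage_lmeasurable fmeasurableD)

lemma weighted_length_summable: "closed X \<Longrightarrow> (\<lambda>i. w i * pushforward_length \<gamma> (\<rho> i) X) summable_on I"
  by (rule summable_on_comparison_test[OF weight_summable])
     (auto simp: weight_nonneg pushforward_length_nonneg pushforward_length_le_1 mult_left_le)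

lemma mu_nonneg: "0 \<le> mu X"
  unfolding mu_def by (rule infsum_nonneg) (simp add: weight_nonneg pushforward_length_nonneg)

lemma mu_mono: "closed Y \<Longrightarrow> X \<subseteq> Y \<Longrightarrow> closed X \<Longrightarrow> mu X \<le> mu Y"
  unfolding mu_def
  by (rule infsum_mono[OF weighted_length_summable weighted_length_summable])
     (auto simp: weight_nonneg pushforward_length_mono mult_left_mono)

lemma param_preimage_finite: "i\<in>I \<Longrightarrow> finite Z \<Longrightarrow> finite (param_preimage \<gamma> (\<rho> i) Z)"
proof -
  assume i: "i\<in>I" and "finite Z"
  have "param_preimage \<gamma> (\<rho> i) Z \<subseteq> (\<Union>z\<in>Z. {t\<in>{0..1}. \<gamma> t = \<rho>' i z})"
  proof
    fix t assume "t \<in> param_preimage \<gamma> (\<rho> i) Z"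
    then have t: "t \<in> {0..1}" "\<rho> i (\<gamma> t) \<in> Z" by (auto simp: param_preimage_def)
    then have "\<rho>' i (\<rho> i (\<gamma> t)) = \<gamma> t"
      using homeo[OF i] param_image by (auto simp: homeomorphism_apply1)
    then show "t \<in> (\<Union>z\<in>Z. {t\<in>{0..1}. \<gamma> t = \<rho>' i z})" using t by force
  qed
  then show ?thesis using \<open>finite Z\<close> finite_fibres by (meson finite_UN_I finite_subset)
qed

lemma pushforward_length_finite: "i\<in>I \<Longrightarrow> finite Z \<Longrightarrow> pushforward_length \<gamma> (\<rho> i) Z = 0"
  unfolding pushforward_length_def
  using param_preimage_finite negligible_finite negligible_imp_measure0 by blast

lemma mu_finite: "finite Z \<Longrightarrow> mu Z = 0"
  unfolding mu_def by (metis (no_types, lifting) infsum_0 mult_zero_right pushforward_length_finite)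

lemma pushforward_length_Un:
  assumes "i\<in>I" "closed X" "closed Y" "finite (X \<inter> Y)"
  shows "pushforward_length \<gamma> (\<rho> i) (X \<union> Y) = pushforward_length \<gamma> (\<rho> i) X + pushforward_length \<gamma> (\<rho> i) Y"
proof -
  have Un: "param_preimage \<gamma> (\<rho> i) (X \<union> Y) = param_preimage \<gamma> (\<rho> i) X \<union> param_preimage \<gamma> (\<rho> i) Y"
    and Int: "param_preimage \<gamma> (\<rho> i) X \<inter> param_preimage \<gamma> (\<rho> i) Y = param_preimage \<gamma> (\<rho> i) (X \<inter> Y)"
    by (auto simp: param_preimage_def)
  have "measure lebesgue (param_preimage \<gamma> (\<rho> i) (X \<inter> Y)) = 0"
    using pushforward_length_finite assms unfolding pushforward_length_def by blast
  then show ?thesis unfolding pushforward_length_def Un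
    using measure_Un3[OF param_preimage_lmeasurable[OF assms(1,2)] param_preimage_lmeasurable[OF assms(1,3)]] Int
    by simp
qed

lemma mu_Un:
  assumes "closed X" "closed Y" "finite (X \<inter> Y)"
  shows "mu (X \<union> Y) = mu X + mu Y"
  unfolding mu_def
  by (subst infsum_add[symmetric])
     (use assms weighted_length_summable pushforward_length_Un in \<open>auto simp: distrib_left intro!: infsum_cong\<close>)

lemma mu_arc_lower_bound:
  assumes "0 \<le> a" "a \<le> b" "b \<le> 1"
  shows "w i0 * (b - a) \<le> mu (\<gamma>`{a..b})"
proof -
  have "param_preimage \<gamma> (\<rho> i0) X = param_preimage \<gamma> id X" for X
    using \<rho>_i0 param_image unfolding param_preimage_def by auto
  then have "pushforward_length \<gamma> (\<rho> i0) (\<gamma>`{a..b}) = b - a"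
    using measure_param_preimage_arc assms unfolding pushforward_length_def by simp
  moreover have "w i0 * pushforward_length \<gamma> (\<rho> i0) (\<gamma>`{a..b}) \<le> mu (\<gamma>`{a..b})"
    unfolding mu_def
    using finite_sum_le_infsum[OF weighted_length_summable, of "\<gamma>`{a..b}" "{i0}"] i0_in assms closed_arc
    by (auto simp: weight_nonneg pushforward_length_nonneg)
  ultimately show ?thesis by simp
qed

lemma mu_image_le:
  assumes T: "homeomorphism M M T T'" and shift: "shifts_weighted_family I w \<rho> M e T"
    and K: "closed K" "K \<subseteq> M"
  shows "mu (T`K) \<le> exp e * mu K"
proof -
  obtain \<sigma> where \<sigma>: "bij_betw \<sigma> I I" and T\<rho>: "\<And>i x. i\<in>I \<Longrightarrow> x\<in>M \<Longrightarrow> T (\<rho> (\<sigma> i) x) = \<rho> i x"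
    and weight: "\<And>i. i\<in>I \<Longrightarrow> w i \<le> exp e * w (\<sigma> i)"
    using shift unfolding shifts_weighted_family_def by blast
  let ?L = "\<lambda>i. w i * pushforward_length \<gamma> (\<rho> i) K"
  have length_eq: "pushforward_length \<gamma> (\<rho> i) (T`K) = pushforward_length \<gamma> (\<rho> (\<sigma> i)) K" if i: "i\<in>I" for i
  proof -
    have "\<rho> i (\<gamma> t) \<in> T`K \<longleftrightarrow> \<rho> (\<sigma> i) (\<gamma> t) \<in> K" if t: "t\<in>{0..1}" for t
    proof -
      have "\<gamma> t \<in> M" using t param_image by auto
      moreover have "\<sigma> i \<in> I" using \<sigma> i bij_betwE by blast
      ultimately have "\<rho> (\<sigma> i) (\<gamma> t) \<in> M" using homeo homeomorphism_image1 by blast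
      moreover have "inj_on T M" using T by (metis homeomorphism_apply1 inj_on_inverseI)
      ultimately show ?thesis using T\<rho>[OF i \<open>\<gamma> t \<in> M\<close>, symmetric] K(2) by (auto dest: inj_onD)
    qed
    then show ?thesis by (auto simp: pushforward_length_def param_preimage_def intro!: arg_cong[where f="measure _"])
  qed
  have summable_shifted: "(\<lambda>i. ?L (\<sigma> i)) summable_on I"
    using summable_on_reindex_bij_betw[OF \<sigma>, of ?L] weighted_length_summable K by simp
  have "mu (T`K) = (\<Sum>\<^sub>\<infinity>i\<in>I. w i * pushforward_length \<gamma> (\<rho> (\<sigma> i)) K)"
    unfolding mu_def by (intro infsum_cong) (simp add: length_eq)
  also have "\<dots> \<le> (\<Sum>\<^sub>\<infinity>i\<in>I. exp e * ?L (\<sigma> i))"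
  proof (rule infsum_mono)
    show "(\<lambda>i. exp e * ?L (\<sigma> i)) summable_on I"
      by (rule summable_on_cmult_right[OF summable_shifted])
    show le: "w i * pushforward_length \<gamma> (\<rho> (\<sigma> i)) K \<le> exp e * ?L (\<sigma> i)" if "i\<in>I" for i
      using weight[OF that] pushforward_length_nonneg[of \<gamma> "\<rho> (\<sigma> i)" K]
      by (simp add: mult_right_mono mult.assoc[symmetric])
    show "(\<lambda>i. w i * pushforward_length \<gamma> (\<rho> (\<sigma> i)) K) summable_on I"
      by (rule summable_on_comparison_test[OF summable_on_cmult_right[OF summable_shifted]])
         (use le weight_nonneg pushforward_length_nonneg in auto)
  qed
  also have "\<dots> = exp e * (\<Sum>\<^sub>\<infinity>i\<in>I. ?L (\<sigma> i))"
    by (rule infsum_cmult_right[OF summable_shifted])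
  also have "(\<Sum>\<^sub>\<infinity>i\<in>I. ?L (\<sigma> i)) = mu K"
    unfolding mu_def using infsum_reindex_bij_betw[OF \<sigma>, of ?L] by simp
  finally show ?thesis .
qed

lemma pushforward_length_short_arc:
  assumes i: "i \<in> I" and "\<eta> > 0"
  shows "\<exists>d>0. \<forall>a b. 0 \<le> a \<longrightarrow> a \<le> b \<longrightarrow> b \<le> 1 \<longrightarrow> b - a < d \<longrightarrow>
            pushforward_length \<gamma> (\<rho> i) (\<gamma>`{a..b}) \<le> \<eta>"
proof -
  obtain \<delta> where \<delta>: "\<delta> > 0" "\<And>c. measure lebesgue {t\<in>{0..1}. \<gamma> t \<in> cball c \<delta>} \<le> \<eta>"
    using preimage_ball_small[OF \<open>\<eta> > 0\<close>] by blast
  have "continuous_on {0..1} (\<rho>' i \<circ> \<gamma>)"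
    by (metis param_cont param_image continuous_on_compose homeo[OF i] homeomorphism_cont2)
  then have "uniformly_continuous_on {0..1} (\<rho>' i \<circ> \<gamma>)"
    by (simp add: compact_uniformly_continuous)
  then obtain d where d: "d > 0"
    "\<And>s t. s\<in>{0..1} \<Longrightarrow> t\<in>{0..1} \<Longrightarrow> dist s t < d \<Longrightarrow> dist (\<rho>' i (\<gamma> s)) (\<rho>' i (\<gamma> t)) < \<delta>"
    using \<delta>(1) unfolding uniformly_continuous_on_def by (metis comp_apply)
  show ?thesis
  proof (intro exI[of _ d] conjI allI impI \<open>d > 0\<close>)
    fix a b :: real assume ab: "0 \<le> a" "a \<le> b" "b \<le> 1" "b - a < d"
    let ?B = "{t\<in>{0..1}. \<gamma> t \<in> cball (\<rho>' i (\<gamma> a)) \<delta>}"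
    have sub: "param_preimage \<gamma> (\<rho> i) (\<gamma>`{a..b}) \<subseteq> ?B"
    proof
      fix t assume "t \<in> param_preimage \<gamma> (\<rho> i) (\<gamma>`{a..b})"
      then obtain s where t: "t \<in> {0..1}" and s: "s \<in> {a..b}" "\<rho> i (\<gamma> t) = \<gamma> s"
        by (auto simp: param_preimage_def)
      have "\<gamma> t = \<rho>' i (\<gamma> s)"
        using s t homeo[OF i] param_image by (metis homeomorphism_apply1 imageI)
      moreover have "dist (\<rho>' i (\<gamma> a)) (\<rho>' i (\<gamma> s)) < \<delta>"
        using d(2)[of a s] s ab by (auto simp: dist_real_def)
      ultimately show "t \<in> ?B" using t by (auto simp: dist_commute less_imp_le)
    qed
    have "compact ?B"
      using param_preimage_compact[of id \<gamma> "cball _ \<delta>"] param_cont by (auto simp: param_preimage_def)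
    then have "pushforward_length \<gamma> (\<rho> i) (\<gamma>`{a..b}) \<le> measure lebesgue ?B"
      unfolding pushforward_length_def
      by (intro measure_mono_fmeasurable[OF sub])
         (use param_preimage_lmeasurable[OF i closed_arc] ab lmeasurable_compact in auto)
    then show "pushforward_length \<gamma> (\<rho> i) (\<gamma>`{a..b}) \<le> \<eta>" using \<delta>(2) by (meson order_trans)
  qed
qed

text \<open>Only finitely many indices carry most of the weight; on short arcs their contributions are
  uniformly small, and the tail contributes at most its total weight.\<close>

lemma mu_short_arc:
  assumes "\<eta> > 0"
  shows "\<exists>\<delta>>0. \<forall>a b. 0 \<le> a \<longrightarrow> a \<le> b \<longrightarrow> b \<le> 1 \<longrightarrow> b - a < \<delta> \<longrightarrow> mu (\<gamma>`{a..b}) \<le> \<eta>"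
proof -
  obtain F where F: "finite F" "F \<subseteq> I" "dist (sum w F) (infsum w I) \<le> \<eta>/2"
    using infsum_finite_approximation[OF weight_summable, of "\<eta>/2"] assms by auto
  have tail: "infsum w (I - F) \<le> \<eta>/2"
    using infsum_split_finite[OF weight_summable F(1,2)] F(3) by (simp add: dist_real_def)
  have wF: "0 \<le> sum w F" using F weight_nonneg by (auto intro: sum_nonneg)
  define \<eta>' where "\<eta>' = \<eta> / (2 * (sum w F + 1))"
  have "\<eta>' > 0" using assms wF by (simp add: \<eta>'_def)
  obtain d where d: "\<And>i. i\<in>I \<Longrightarrow> d i > 0 \<and> (\<forall>a b. 0 \<le> a \<longrightarrow> a \<le> b \<longrightarrow> b \<le> 1 \<longrightarrow> b - a < d i \<longrightarrow>
                        pushforward_length \<gamma> (\<rho> i) (\<gamma>`{a..b}) \<le> \<eta>')"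
    using pushforward_length_short_arc[OF _ \<open>\<eta>' > 0\<close>] by metis
  define \<delta> where "\<delta> = Min (insert 1 (d ` F))"
  have "\<delta> > 0" unfolding \<delta>_def using F d by (auto simp: Min_gr_iff)
  have \<delta>_le: "\<And>i. i \<in> F \<Longrightarrow> \<delta> \<le> d i" unfolding \<delta>_def using F by auto
  show ?thesis
  proof (intro exI[of _ \<delta>] conjI allI impI \<open>\<delta> > 0\<close>)
    fix a b :: real assume ab: "0 \<le> a" "a \<le> b" "b \<le> 1" "b - a < \<delta>"
    let ?A = "\<gamma>`{a..b}"
    have "closed ?A" using ab closed_arc by auto
    have "mu ?A = (\<Sum>i\<in>F. w i * pushforward_length \<gamma> (\<rho> i) ?A)
                  + (\<Sum>\<^sub>\<infinity>i\<in>I-F. w i * pushforward_length \<gamma> (\<rho> i) ?A)"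
      unfolding mu_def by (rule infsum_split_finite[OF weighted_length_summable[OF \<open>closed ?A\<close>] F(1,2)])
    also have "(\<Sum>i\<in>F. w i * pushforward_length \<gamma> (\<rho> i) ?A) \<le> (\<Sum>i\<in>F. w i * \<eta>')"
      using F d \<delta>_le ab by (intro sum_mono mult_left_mono) (force intro: weight_nonneg)+
    also have "(\<Sum>\<^sub>\<infinity>i\<in>I-F. w i * pushforward_length \<gamma> (\<rho> i) ?A) \<le> (\<Sum>\<^sub>\<infinity>i\<in>I-F. w i)"
      by (rule infsum_mono)
         (use summable_on_subset[OF weighted_length_summable[OF \<open>closed ?A\<close>], of "I-F"]
              summable_on_subset[OF weight_summable, of "I-F"]
              pushforward_length_le_1[OF _ \<open>closed ?A\<close>] weight_nonneg in \<open>auto intro: mult_left_le\<close>)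
    also have "(\<Sum>i\<in>F. w i * \<eta>') = \<eta>/2 * (sum w F / (sum w F + 1))"
      unfolding sum_distrib_right[symmetric] \<eta>'_def using wF by (simp add: field_simps)
    also have "\<dots> \<le> \<eta>/2" using wF assms by (intro mult_left_le) auto
    finally show "mu ?A \<le> \<eta>" using tail by linarith
  qed
qed

definition cdf :: "real \<Rightarrow> real" where
  "cdf t = mu (\<gamma>`{0..t})"

lemma cdf_split:
  assumes "0 \<le> a" "a \<le> b" "b \<le> 1"
  shows "cdf b = cdf a + mu (\<gamma>`{a..b})"
proof -
  have "\<gamma>`{0..b} = \<gamma>`{0..a} \<union> \<gamma>`{a..b}"
    using assms by (auto simp: image_Un[symmetric] ivl_disj_un)
  moreover have "finite (\<gamma>`{0..a} \<inter> \<gamma>`{a..b})"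
    by (rule finite_arc_overlap) (use assms in auto)
  moreover have "closed (\<gamma>`{0..a})" "closed (\<gamma>`{a..b})"
    using assms by (auto intro: closed_arc)
  ultimately show ?thesis unfolding cdf_def by (simp add: mu_Un)
qed

lemma mu_complementary_arcs:
  assumes "0 \<le> a" "a \<le> b" "b \<le> 1"
  shows "mu (\<gamma>`{b..1} \<union> \<gamma>`{0..a}) = mu (\<gamma>`{b..1}) + mu (\<gamma>`{0..a})"
  using assms by (intro mu_Un closed_arc finite_arc_overlap) auto

lemma cdf_0: "cdf 0 = 0"
  unfolding cdf_def by (simp add: mu_finite)

lemma cdf_1: "cdf 1 = mu M"
  unfolding cdf_def using param_image by simp

lemma cdf_strict_mono: "0 \<le> a \<Longrightarrow> a < b \<Longrightarrow> b \<le> 1 \<Longrightarrow> cdf a < cdf b"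
  using cdf_split[of a b] mu_arc_lower_bound[of a b] weight_i0
  by (smt (verit) mult_pos_pos)

lemma mu_M_pos: "mu M > 0"
  using cdf_strict_mono[of 0 1] cdf_0 cdf_1 by simp

lemma continuous_on_cdf: "continuous_on {0..1} cdf"
  unfolding continuous_on_iff
proof (intro ballI allI impI)
  fix x e :: real assume x: "x \<in> {0..1}" and "e > 0"
  obtain \<delta> where \<delta>: "\<delta> > 0"
    "\<And>a b. 0 \<le> a \<Longrightarrow> a \<le> b \<Longrightarrow> b \<le> 1 \<Longrightarrow> b - a < \<delta> \<Longrightarrow> mu (\<gamma>`{a..b}) \<le> e/2"
    using mu_short_arc[of "e/2"] \<open>e > 0\<close> by auto
  have "dist (cdf y) (cdf x) < e" if y: "y \<in> {0..1}" "dist y x < \<delta>" for y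
  proof (cases "y \<le> x")
    case True
    then show ?thesis using cdf_split[of y x] \<delta>(2)[of y x] x y \<open>e > 0\<close> mu_nonneg
      by (auto simp: dist_real_def)
  next
    case False
    then show ?thesis using cdf_split[of x y] \<delta>(2)[of x y] x y \<open>e > 0\<close> mu_nonneg
      by (auto simp: dist_real_def)
  qed
  then show "\<exists>d>0. \<forall>y\<in>{0..1}. dist y x < d \<longrightarrow> dist (cdf y) (cdf x) < e"
    using \<delta>(1) by blast
qed

text \<open>The straightening homeomorphism, read in the parameter.\<close>

definition ncdf :: "real \<Rightarrow> real" where
  "ncdf t = cdf t / mu M"

lemma continuous_on_ncdf: "continuous_on {0..1} ncdf"
  unfolding ncdf_def by (intro continuous_intros continuous_on_cdf) (use mu_M_pos in auto)

lemma ncdf_0: "ncdf 0 = 0" and ncdf_1: "ncdf 1 = 1"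
  using cdf_0 cdf_1 mu_M_pos by (auto simp: ncdf_def)

lemma ncdf_strict_mono: "0 \<le> a \<Longrightarrow> a < b \<Longrightarrow> b \<le> 1 \<Longrightarrow> ncdf a < ncdf b"
  using cdf_strict_mono mu_M_pos by (auto simp: ncdf_def divide_strict_right_mono)

lemma ncdf_mono: "0 \<le> a \<Longrightarrow> a \<le> b \<Longrightarrow> b \<le> 1 \<Longrightarrow> ncdf a \<le> ncdf b"
  using ncdf_strict_mono by (cases "a = b") (auto simp: le_less)

lemma ncdf_bounds: "0 \<le> t \<Longrightarrow> t \<le> 1 \<Longrightarrow> 0 \<le> ncdf t \<and> ncdf t \<le> 1"
  using ncdf_mono[of 0 t] ncdf_mono[of t 1] ncdf_0 ncdf_1 by auto

lemma inj_on_ncdf: "inj_on ncdf {0..1}"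
  by (rule linorder_inj_onI) (use ncdf_strict_mono in \<open>auto simp: less_imp_neq\<close>)

lemma ncdf_image: "ncdf ` {0..1} = {0..1}"
proof
  show "ncdf ` {0..1} \<subseteq> {0..1}" using ncdf_bounds by auto
  show "{0..1} \<subseteq> ncdf ` {0..1}"
  proof
    fix y :: real assume "y \<in> {0..1}"
    then obtain x where "0 \<le> x" "x \<le> 1" "ncdf x = y"
      using IVT'[of ncdf 0 y 1] ncdf_0 ncdf_1 continuous_on_ncdf by auto
    then show "y \<in> ncdf ` {0..1}" by auto
  qed
qed

lemma ncdf_diff: "0 \<le> a \<Longrightarrow> a \<le> b \<Longrightarrow> b \<le> 1 \<Longrightarrow> ncdf b - ncdf a = mu (\<gamma>`{a..b}) / mu M"
  using cdf_split[of a b] by (simp add: ncdf_def diff_divide_distrib[symmetric])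

end

section \<open>The interval\<close>

lemma lipschitz_wrt_by_order:
  fixes key :: "'a \<Rightarrow> 'b::linorder"
  assumes sym: "\<And>x y. x \<in> M \<Longrightarrow> y \<in> M \<Longrightarrow> d x y = d y x" and into: "f ` M \<subseteq> M"
    and ordered: "\<And>x y. x \<in> M \<Longrightarrow> y \<in> M \<Longrightarrow> key x \<le> key y \<Longrightarrow> d (f x) (f y) \<le> L * d x y"
  shows "lipschitz_wrt d M L f"
  unfolding lipschitz_wrt_def
proof (intro ballI)
  fix x y assume x: "x \<in> M" and y: "y \<in> M"
  show "d (f x) (f y) \<le> L * d x y"
  proof (cases "key x \<le> key y")
    case True
    then show ?thesis using ordered x y by blast
  next
    case False
    then have "d (f y) (f x) \<le> L * d y x" using ordered x y by simp
    moreover have "f x \<in> M" "f y \<in> M" using into x y by auto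
    ultimately show ?thesis using sym x y by metis
  qed
qed

lemma mem_unit_interval_c_iff: "z \<in> unit_interval_c \<longleftrightarrow> Im z = 0 \<and> Re z \<in> {0..1}"
  by (auto simp: unit_interval_c_def complex_eq_iff)

interpretation unit_interval_param: arc_parametrization complex_of_real unit_interval_c
proof
  show "continuous_on {0..1} complex_of_real" by (intro continuous_intros)
  show "complex_of_real ` {0..1} = unit_interval_c" by (simp add: unit_interval_c_def)
  show "finite {t \<in> {0..1}. complex_of_real t = z}" for z
    by (rule finite_subset[of _ "{Re z}"]) auto
  show "\<exists>F. finite F \<and> {t \<in> {0..1}. complex_of_real t \<in> complex_of_real ` {a..b}} \<subseteq> {a..b} \<union> F"
    for a b :: real by (intro exI[of _ "{}"]) auto
  show "\<exists>\<delta>>0. \<forall>c. measure lebesgue {t \<in> {0..1}. complex_of_real t \<in> cball c \<delta>} \<le> \<eta>"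
    if "\<eta> > 0" for \<eta>
  proof (intro exI[of _ "\<eta>/2"] conjI allI)
    show "\<eta>/2 > 0" using that by simp
    fix c
    let ?B = "{t \<in> {0..1}. complex_of_real t \<in> cball c (\<eta>/2)}"
    have "compact ?B"
      using param_preimage_compact[of id complex_of_real "cball c (\<eta>/2)"]
      by (auto simp: param_preimage_def intro: continuous_intros)
    have sub: "?B \<subseteq> {Re c - \<eta>/2 .. Re c + \<eta>/2}"
    proof
      fix t assume "t \<in> ?B"
      then have "cmod (c - complex_of_real t) \<le> \<eta>/2" by (auto simp: dist_norm)
      moreover have "\<bar>Re (c - complex_of_real t)\<bar> \<le> cmod (c - complex_of_real t)"
        by (rule abs_Re_le_cmod)
      ultimately show "t \<in> {Re c - \<eta>/2 .. Re c + \<eta>/2}" by auto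
    qed
    have "measure lebesgue ?B \<le> measure lebesgue {Re c - \<eta>/2 .. Re c + \<eta>/2}"
      by (rule measure_mono_fmeasurable[OF sub]) (use \<open>compact ?B\<close> lmeasurable_compact in auto)
    also have "\<dots> = \<eta>" using that by simp
    finally show "measure lebesgue ?B \<le> \<eta>" .
  qed
qed

lemma connected_unit_interval_c_contains_segment:
  assumes "connected K" "K \<subseteq> unit_interval_c" "complex_of_real a \<in> K" "complex_of_real b \<in> K"
  shows "complex_of_real ` {a..b} \<subseteq> K"
proof -
  have "connected (Re ` K)"
    using connected_continuous_image[OF continuous_on_Re[OF continuous_on_id] assms(1)] by simp
  moreover have "a \<in> Re ` K" "b \<in> Re ` K"
    using assms(3,4) by (metis Re_complex_of_real image_eqI)+
  ultimately have "{a..b} \<subseteq> Re ` K" by (rule connected_contains_Icc)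
  moreover have "complex_of_real (Re z) = z" if "z \<in> K" for z
    using that assms(2) by (simp add: mem_unit_interval_c_iff complex_eq_iff subset_iff)
  ultimately show ?thesis by force
qed

locale averaged_pushforward_interval =
  averaged_pushforward complex_of_real unit_interval_c I w \<rho> \<rho>' i0
  for I :: "'i set" and w \<rho> \<rho>' i0
begin

definition straighten :: "complex \<Rightarrow> complex" where
  "straighten z = complex_of_real (ncdf (Re z))"

lemma straighten_homeomorphism: "\<exists>h'. homeomorphism unit_interval_c unit_interval_c straighten h'"
proof (rule homeomorphism_compact)
  show "compact unit_interval_c" by (rule unit_interval_param.compact_M)
  have "Re ` unit_interval_c \<subseteq> {0..1}" by (auto simp: mem_unit_interval_c_iff)
  then have "continuous_on unit_interval_c (ncdf \<circ> Re)"
    by (intro continuous_on_compose continuous_intros continuous_on_subset[OF continuous_on_ncdf])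
  then show "continuous_on unit_interval_c straighten"
    unfolding straighten_def o_def by (rule continuous_on_of_real)
  have "straighten ` (complex_of_real`{0..1}) = complex_of_real ` (ncdf ` {0..1})"
    by (simp add: image_image straighten_def)
  then show "straighten ` unit_interval_c = unit_interval_c"
    using ncdf_image unfolding unit_interval_c_def by simp
  show "inj_on straighten unit_interval_c"
  proof (rule inj_onI)
    fix x y assume xy: "x \<in> unit_interval_c" "y \<in> unit_interval_c" "straighten x = straighten y"
    then have "ncdf (Re x) = ncdf (Re y)" by (simp add: straighten_def)
    then have "Re x = Re y"
      using inj_on_ncdf xy(1,2) unfolding mem_unit_interval_c_iff inj_on_def by blast
    then show "x = y" using xy(1,2) unfolding mem_unit_interval_c_iff by (simp add: complex_eq_iff)
  qed
qed

lemma dist_ncdf_le_mu: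
  assumes K: "connected K" "closed K" "K \<subseteq> unit_interval_c"
    and uv: "u \<in> {0..1}" "v \<in> {0..1}" "complex_of_real u \<in> K" "complex_of_real v \<in> K"
  shows "dist (ncdf u) (ncdf v) \<le> mu K / mu unit_interval_c"
proof -
  have ordered: "dist (ncdf u) (ncdf v) \<le> mu K / mu unit_interval_c"
    if uv: "u \<in> {0..1}" "v \<in> {0..1}" "u \<le> v" "complex_of_real u \<in> K" "complex_of_real v \<in> K" for u v
  proof -
    have "complex_of_real ` {u..v} \<subseteq> K"
      using connected_unit_interval_c_contains_segment[OF K(1,3) uv(4,5)] .
    then have "mu (complex_of_real ` {u..v}) \<le> mu K"
      using uv by (intro mu_mono[OF K(2)] closed_arc) auto
    then show ?thesis using ncdf_diff[of u v] ncdf_mono[of u v] uv mu_M_pos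
      by (simp add: dist_real_def divide_right_mono)
  qed
  show ?thesis
    using ordered[of u v] ordered[of v u] uv by (cases "u \<le> v") (auto simp: dist_commute)
qed

lemma dist_straighten_image_le:
  assumes T: "homeomorphism unit_interval_c unit_interval_c T T'"
    and shift: "shifts_weighted_family I w \<rho> unit_interval_c e T"
    and A: "compact A" "connected A" "A \<subseteq> unit_interval_c" "p \<in> A" "q \<in> A"
  shows "dist (straighten (T p)) (straighten (T q)) \<le> exp e * mu A / mu unit_interval_c"
proof -
  let ?K = "T ` A"
  have "continuous_on A T" using T A(3) homeomorphism_cont1 continuous_on_subset by blast
  then have K: "connected ?K" "closed ?K" "?K \<subseteq> unit_interval_c"
    using A T by (auto intro: connected_continuous_image compact_continuous_image compact_imp_closed
        dest: homeomorphism_image1)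
  have "T p \<in> ?K" "T q \<in> ?K" using A by auto
  then have "T p \<in> unit_interval_c" "T q \<in> unit_interval_c" using K(3) by blast+
  then have "complex_of_real (Re (T p)) = T p" "complex_of_real (Re (T q)) = T q"
    "Re (T p) \<in> {0..1}" "Re (T q) \<in> {0..1}"
    unfolding mem_unit_interval_c_iff by (simp_all add: complex_eq_iff)
  then have "dist (straighten (T p)) (straighten (T q)) \<le> mu ?K / mu unit_interval_c"
    using dist_ncdf_le_mu[OF K] \<open>T p \<in> ?K\<close> \<open>T q \<in> ?K\<close> by (simp add: straighten_def dist_of_real)
  also have "\<dots> \<le> exp e * mu A / mu unit_interval_c"
    using mu_image_le[OF T shift compact_imp_closed[OF A(1)] A(3)] mu_M_pos by (simp add: divide_right_mono)
  finally show ?thesis .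
qed

lemma straighten_conj_lipschitz:
  assumes h: "homeomorphism unit_interval_c unit_interval_c straighten h'"
    and T: "homeomorphism unit_interval_c unit_interval_c T T'"
    and shift: "shifts_weighted_family I w \<rho> unit_interval_c e T"
  shows "lipschitz_wrt dist unit_interval_c (exp e) (straighten \<circ> T \<circ> h')"
proof (rule lipschitz_wrt_by_order[where key = "\<lambda>x. Re (h' x)"])
  show "(straighten \<circ> T \<circ> h') ` unit_interval_c \<subseteq> unit_interval_c"
    using h T unfolding homeomorphism_def by (metis image_comp order_refl)
  fix x y assume x: "x \<in> unit_interval_c" and y: "y \<in> unit_interval_c" and le: "Re (h' x) \<le> Re (h' y)"
  define a where "a = Re (h' x)"
  define b where "b = Re (h' y)"
  have "h' x \<in> unit_interval_c" "h' y \<in> unit_interval_c"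
    using h x y homeomorphism_image2 by blast+
  then have ab: "0 \<le> a" "a \<le> b" "b \<le> 1" and h'_ab: "h' x = complex_of_real a" "h' y = complex_of_real b"
    using le by (auto simp: mem_unit_interval_c_iff complex_eq_iff a_def b_def)
  have "x = straighten (h' x)" "y = straighten (h' y)" using h x y by (auto simp: homeomorphism_apply2)
  then have "dist x y = ncdf b - ncdf a"
    using ncdf_mono[OF ab] by (simp add: straighten_def h'_ab dist_real_def)
  also have "\<dots> = mu (complex_of_real ` {a..b}) / mu unit_interval_c" using ncdf_diff[OF ab] .
  finally have dist_xy: "dist x y = mu (complex_of_real ` {a..b}) / mu unit_interval_c" .
  have "compact (complex_of_real ` {a..b})" "connected (complex_of_real ` {a..b})"
    "complex_of_real ` {a..b} \<subseteq> unit_interval_c"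
    using ab by (auto simp: mem_unit_interval_c_iff intro!: connected_continuous_image
        compact_continuous_image continuous_intros)
  then show "dist ((straighten \<circ> T \<circ> h') x) ((straighten \<circ> T \<circ> h') y) \<le> exp e * dist x y"
    using dist_straighten_image_le[OF T shift] ab by (simp add: dist_xy h'_ab)
qed (simp add: dist_commute)

end

section \<open>The circle\<close>

definition cis_turn :: "real \<Rightarrow> complex" where
  "cis_turn t = cis (2 * pi * t)"

definition turn :: "complex \<Rightarrow> real" where
  "turn z = Arg2pi z / (2 * pi)"

lemma mem_circle_iff: "z \<in> circle \<longleftrightarrow> norm z = 1"
  by (simp add: circle_def)

lemma norm_cis_turn [simp]: "norm (cis_turn t) = 1"
  by (simp add: cis_turn_def)

lemma cis_turn_in_circle [simp]: "cis_turn t \<in> circle"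
  by (simp add: mem_circle_iff)

lemma continuous_on_cis_turn [continuous_intros]: "continuous_on S cis_turn"
  unfolding cis_turn_def by (intro continuous_intros)

lemma turn_bounds: "0 \<le> turn z" "turn z < 1"
  using Arg2pi[of z] by (auto simp: turn_def divide_simps)

lemma cis_turn_turn: "z \<in> circle \<Longrightarrow> cis_turn (turn z) = z"
  using complex_norm_eq_1_exp[of z]
  by (simp add: cis_turn_def turn_def mem_circle_iff cis_conv_exp mult.commute)

lemma turn_cis_turn:
  assumes "0 \<le> t" "t < 1"
  shows "turn (cis_turn t) = t"
proof -
  have "Arg2pi (exp (\<i> * complex_of_real (2 * pi * t))) = Im (\<i> * complex_of_real (2 * pi * t))"
    by (rule Arg2pi_exp) (use assms in auto)
  then show ?thesis by (simp add: cis_turn_def turn_def cis_conv_exp)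
qed

lemma cis_turn_add_1: "cis_turn (t + 1) = cis_turn t"
  and cis_turn_diff_1: "cis_turn (t - 1) = cis_turn t"
  by (simp_all add: cis_turn_def cis.ctr complex_eq_iff distrib_left cos_add sin_add
      right_diff_distrib cos_diff sin_diff)

lemma cis_turn_1: "cis_turn 1 = cis_turn 0"
  using cis_turn_add_1[of 0] by simp

lemma cis_turn_divide: "cis_turn t / cis_turn s = cis_turn (t - s)"
  by (simp add: cis_turn_def cis_divide right_diff_distrib)

lemma cis_turn_image: "cis_turn ` {0..1} = circle"
proof
  show "circle \<subseteq> cis_turn ` {0..1}"
    using cis_turn_turn turn_bounds by (metis atLeastAtMost_iff image_eqI less_imp_le subsetI)
qed auto

lemma two_pi_mult_in_Arg_range:
  assumes "-1/2 < y" "y \<le> 1/2"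
  shows "2 * pi * y \<in> {-pi<..pi}"
proof -
  have "0 < 2 * pi * (y + 1/2)" "0 \<le> 2 * pi * (1/2 - y)"
    using assms pi_gt_zero by (auto intro: mult_pos_pos mult_nonneg_nonneg)
  then show ?thesis by (auto simp: algebra_simps)
qed

lemma abs_Arg_cis_turn:
  assumes "\<bar>x\<bar> \<le> 1"
  shows "\<bar>Arg (cis_turn x)\<bar> = 2 * pi * min \<bar>x\<bar> (1 - \<bar>x\<bar>)"
proof -
  consider "-1/2 < x" "x \<le> 1/2" | "1/2 < x" | "x \<le> -1/2" by linarith
  then show ?thesis
  proof cases
    case 1
    then have "Arg (cis_turn x) = 2 * pi * x"
      unfolding cis_turn_def by (intro Arg_cis two_pi_mult_in_Arg_range)
    then show ?thesis using 1 by (auto simp: abs_mult min_def)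
  next
    case 2
    then have "Arg (cis_turn (x - 1)) = 2 * pi * (x - 1)"
      unfolding cis_turn_def using assms by (intro Arg_cis two_pi_mult_in_Arg_range) auto
    then show ?thesis using 2 assms by (auto simp: abs_mult min_def cis_turn_diff_1)
  next
    case 3
    then have "Arg (cis_turn (x + 1)) = 2 * pi * (x + 1)"
      unfolding cis_turn_def using assms by (intro Arg_cis two_pi_mult_in_Arg_range) auto
    then show ?thesis using 3 assms by (auto simp: abs_mult min_def cis_turn_add_1)
  qed
qed

lemma circ_dist_cis_turn:
  assumes "t \<in> {0..1}" "s \<in> {0..1}"
  shows "circ_dist (cis_turn t) (cis_turn s) = 2 * pi * min \<bar>t - s\<bar> (1 - \<bar>t - s\<bar>)"
  unfolding circ_dist_def cis_turn_divide using assms by (intro abs_Arg_cis_turn) auto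

lemma circ_dist_commute: "z \<in> circle \<Longrightarrow> w \<in> circle \<Longrightarrow> circ_dist z w = circ_dist w z"
  using circ_dist_cis_turn[of "turn z" "turn w"] circ_dist_cis_turn[of "turn w" "turn z"]
    turn_bounds[of z] turn_bounds[of w]
  by (simp add: cis_turn_turn abs_minus_commute)

lemma circ_dist_nonneg: "0 \<le> circ_dist z w"
  by (simp add: circ_dist_def)

lemma cis_turn_eq_cases:
  assumes "t \<in> {0..1}" "s \<in> {0..1}" "cis_turn t = cis_turn s"
  shows "t = s \<or> \<bar>t - s\<bar> = 1"
proof -
  have "cis_turn s \<noteq> 0" using norm_cis_turn[of s] by (metis norm_zero zero_neq_one)
  then have "circ_dist (cis_turn t) (cis_turn s) = 0" using assms by (simp add: circ_dist_def)
  then have "min \<bar>t - s\<bar> (1 - \<bar>t - s\<bar>) = 0" using circ_dist_cis_turn[OF assms(1,2)] by simp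
  then show ?thesis by (auto simp: min_def split: if_splits)
qed

lemma cis_turn_inj: "t \<in> {0..<1} \<Longrightarrow> s \<in> {0..<1} \<Longrightarrow> cis_turn t = cis_turn s \<Longrightarrow> t = s"
  using cis_turn_eq_cases[of t s] by auto

lemma circ_dist_less_if_dist_less:
  assumes "\<eta> > 0"
  shows "\<exists>\<delta>>0. \<forall>z w. z \<in> circle \<longrightarrow> w \<in> circle \<longrightarrow> dist z w < \<delta> \<longrightarrow> circ_dist z w < \<eta>"
proof -
  have "isCont Arg 1" by (rule continuous_at_Arg) (auto simp: complex_nonpos_Reals_iff)
  then obtain \<delta> where \<delta>: "\<delta> > 0" "\<And>u. dist u 1 < \<delta> \<Longrightarrow> dist (Arg u) (Arg 1) < \<eta>"
    using assms unfolding continuous_at_eps_delta by blast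
  have "circ_dist z w < \<eta>" if zw: "z \<in> circle" "w \<in> circle" "dist z w < \<delta>" for z w
  proof -
    have "w \<noteq> 0" using zw by (auto simp: mem_circle_iff)
    then have "dist (z / w) 1 = norm ((z - w) / w)" by (simp add: dist_norm diff_divide_distrib)
    also have "\<dots> = dist z w" using zw by (simp add: norm_divide mem_circle_iff dist_norm)
    finally show ?thesis using \<delta>(2)[of "z/w"] zw by (simp add: circ_dist_def dist_real_def)
  qed
  then show ?thesis using \<delta>(1) by blast
qed

lemma measure_preimage_cball_cis_turn:
  assumes "\<eta> > 0"
  shows "\<exists>\<delta>>0. \<forall>c. measure lebesgue {t \<in> {0..1}. cis_turn t \<in> cball c \<delta>} \<le> \<eta>"
proof -
  define \<kappa> where "\<kappa> = \<eta> / 4"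
  have "\<kappa> > 0" using assms by (simp add: \<kappa>_def)
  obtain \<delta> where \<delta>: "\<delta> > 0"
    "\<And>z w. z \<in> circle \<Longrightarrow> w \<in> circle \<Longrightarrow> dist z w < \<delta> \<Longrightarrow> circ_dist z w < 2 * pi * \<kappa>"
    using circ_dist_less_if_dist_less[of "2 * pi * \<kappa>"] \<open>\<kappa> > 0\<close> by auto
  have "measure lebesgue {t \<in> {0..1}. cis_turn t \<in> cball c (\<delta>/3)} \<le> \<eta>" for c
  proof (cases "{t \<in> {0..1}. cis_turn t \<in> cball c (\<delta>/3)} = {}")
    case True
    show ?thesis unfolding True using assms by simp
  next
    case False
    let ?S = "{t \<in> {0..1}. cis_turn t \<in> cball c (\<delta>/3)}"
    obtain t0 where t0: "t0 \<in> ?S" using False by blast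
    have "compact ?S"
      using param_preimage_compact[of id cis_turn "cball c (\<delta>/3)"]
      by (auto simp: param_preimage_def intro: continuous_intros)
    have sub: "?S \<subseteq> {t0 - \<kappa>..t0 + \<kappa>} \<union> {0..\<kappa>} \<union> {1 - \<kappa>..1}"
    proof
      fix t assume t: "t \<in> ?S"
      have "dist (cis_turn t) (cis_turn t0) \<le> dist (cis_turn t) c + dist c (cis_turn t0)"
        by (rule dist_triangle)
      also have "\<dots> < \<delta>" using t t0 \<delta>(1) by (auto simp: dist_commute)
      finally have "circ_dist (cis_turn t) (cis_turn t0) < 2 * pi * \<kappa>" using \<delta>(2) by auto
      then have "min \<bar>t - t0\<bar> (1 - \<bar>t - t0\<bar>) < \<kappa>" using circ_dist_cis_turn[of t t0] t t0 by auto
      then show "t \<in> {t0 - \<kappa>..t0 + \<kappa>} \<union> {0..\<kappa>} \<union> {1 - \<kappa>..1}"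
        using t t0 by (auto simp: min_def abs_if split: if_splits)
    qed
    have "measure lebesgue ?S \<le> measure lebesgue ({t0 - \<kappa>..t0 + \<kappa>} \<union> {0..\<kappa>} \<union> {1 - \<kappa>..1})"
      by (rule measure_mono_fmeasurable[OF sub]) (use \<open>compact ?S\<close> lmeasurable_compact in auto)
    also have "\<dots> \<le> measure lebesgue ({t0 - \<kappa>..t0 + \<kappa>} \<union> {0..\<kappa>}) + measure lebesgue {1 - \<kappa>..1::real}"
      by (rule measure_Un_le) auto
    also have "measure lebesgue ({t0 - \<kappa>..t0 + \<kappa>} \<union> {0..\<kappa>})
                 \<le> measure lebesgue {t0 - \<kappa>..t0 + \<kappa>} + measure lebesgue {0..\<kappa>::real}"
      by (rule measure_Un_le) auto
    finally show ?thesis using \<open>\<kappa> > 0\<close> by (simp add: \<kappa>_def)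
  qed
  then show ?thesis using \<delta>(1) by (intro exI[of _ "\<delta>/3"]) auto
qed

interpretation circle_param: arc_parametrization cis_turn circle
proof
  show "continuous_on {0..1} cis_turn" by (intro continuous_intros)
  show "cis_turn ` {0..1} = circle" by (rule cis_turn_image)
  show "finite {t \<in> {0..1}. cis_turn t = z}" for z
  proof (rule finite_subset)
    show "{t \<in> {0..1}. cis_turn t = z} \<subseteq> {turn z, turn z + 1}"
    proof
      fix t assume t: "t \<in> {t \<in> {0..1}. cis_turn t = z}"
      then have "z \<in> circle" by auto
      then have "t = turn z \<or> \<bar>t - turn z\<bar> = 1"
        using cis_turn_eq_cases[of t "turn z"] t turn_bounds[of z] by (auto simp: cis_turn_turn)
      then show "t \<in> {turn z, turn z + 1}" using t turn_bounds[of z] by auto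
    qed
  qed simp
  show "\<exists>F. finite F \<and> {t \<in> {0..1}. cis_turn t \<in> cis_turn ` {a..b}} \<subseteq> {a..b} \<union> F"
    if "0 \<le> a" "a \<le> b" "b \<le> 1" for a b
  proof (intro exI[of _ "{0,1}"] conjI)
    show "{t \<in> {0..1}. cis_turn t \<in> cis_turn ` {a..b}} \<subseteq> {a..b} \<union> {0, 1}"
    proof
      fix t assume "t \<in> {t \<in> {0..1}. cis_turn t \<in> cis_turn ` {a..b}}"
      then obtain s where ts: "t \<in> {0..1}" "s \<in> {a..b}" "cis_turn t = cis_turn s" by auto
      then have "t = s \<or> \<bar>t - s\<bar> = 1" using cis_turn_eq_cases[of t s] that by auto
      then show "t \<in> {a..b} \<union> {0, 1}" using ts that by (auto simp: abs_if split: if_splits)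
    qed
  qed simp
  show "\<exists>\<delta>>0. \<forall>c. measure lebesgue {t \<in> {0..1}. cis_turn t \<in> cball c \<delta>} \<le> \<eta>" if "\<eta> > 0" for \<eta>
    using measure_preimage_cball_cis_turn[OF that] .
qed

lemma continuous_on_through_quotient:
  fixes f :: "'a::metric_space \<Rightarrow> 'b::metric_space" and g :: "'b \<Rightarrow> 'c::metric_space"
  assumes "compact S" "continuous_on S f" "f ` S = T" "continuous_on S (g \<circ> f)"
  shows "continuous_on T g"
proof -
  have q: "quotient_map (top_of_set S) (top_of_set T) f"
  proof (rule continuous_imp_quotient_map)
    show "continuous_map (top_of_set S) (top_of_set T) f"
      using assms by (simp add: continuous_map_in_subtopology image_subset_iff_funcset[symmetric])
    show "compact_space (top_of_set S)" using assms by (simp add: compact_space_subtopology)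
    show "Hausdorff_space (top_of_set T)" by (simp add: Hausdorff_space_subtopology)
    show "f ` topspace (top_of_set S) = topspace (top_of_set T)" using assms by simp
  qed
  have "continuous_map (top_of_set S) euclidean (g \<circ> f)" using assms by simp
  then have "continuous_map (top_of_set T) euclidean g" by (rule continuous_compose_quotient_map[OF q])
  then show ?thesis by simp
qed

lemma Arg_inj_on_circle:
  assumes "norm u = 1" "norm v = 1" "Arg u = Arg v"
  shows "u = v"
proof -
  have "u \<noteq> 0" "v \<noteq> 0" "sgn u = u" "sgn v = v" using assms by (auto simp: sgn_div_norm)
  then have "cis (Arg u) = u" "cis (Arg v) = v" using cis_Arg by metis+
  then show ?thesis using assms(3) by metis
qed

text \<open>Seen from the antipode \<open>- w\<close> of a point \<open>w\<close>, the argument is continuous on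
  \<open>circle - {w}\<close> and increases linearly with the turn parameter on either side of \<open>w\<close>.\<close>

lemma Arg_minus_cis_turn_divide:
  "t - s \<in> {-1<..<0} \<Longrightarrow> Arg (- cis_turn t / cis_turn s) = 2 * pi * (t - s) + pi"
  "t - s \<in> {0<..<1} \<Longrightarrow> Arg (- cis_turn t / cis_turn s) = 2 * pi * (t - s) - pi"
proof -
  assume "t - s \<in> {-1<..<0}"
  moreover have "- cis_turn t / cis_turn s = cis (2 * pi * (t - s) + pi)"
    by (simp add: cis_turn_def minus_cis[symmetric] cis_divide right_diff_distrib)
  ultimately show "Arg (- cis_turn t / cis_turn s) = 2 * pi * (t - s) + pi"
    using two_pi_mult_in_Arg_range[of "t - s + 1/2"] by (simp add: Arg_cis algebra_simps)
next
  assume "t - s \<in> {0<..<1}"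
  moreover have "- cis_turn t / cis_turn s = cis (2 * pi * (t - s) - pi)"
    by (simp add: cis_turn_def minus_cis'[symmetric] cis_divide right_diff_distrib)
  ultimately show "Arg (- cis_turn t / cis_turn s) = 2 * pi * (t - s) - pi"
    using two_pi_mult_in_Arg_range[of "t - s - 1/2"] by (simp add: Arg_cis algebra_simps)
qed

lemma continuous_on_Arg_minus_divide:
  assumes "K \<subseteq> circle" "norm w = 1" "w \<notin> K"
  shows "continuous_on K (\<lambda>z. Arg (- z / w))"
proof (rule continuous_at_imp_continuous_on, rule ballI)
  fix z assume z: "z \<in> K"
  have "- z / w \<notin> \<real>\<^sub>\<le>\<^sub>0"
  proof
    assume "- z / w \<in> \<real>\<^sub>\<le>\<^sub>0"
    then obtain r where r: "- z / w = of_real r" "r \<le> 0"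
      by (auto simp: complex_nonpos_Reals_iff complex_eq_iff)
    have "norm (- z / w) = 1" using z assms by (auto simp: norm_divide mem_circle_iff)
    then have "r = -1" using r by (metis abs_of_nonpos norm_of_real minus_equation_iff real_norm_def)
    then have "z = w" using r assms(2) by (auto simp: field_simps)
    then show False using z assms(3) by auto
  qed
  then have "isCont Arg (- z / w)" by (rule continuous_at_Arg)
  moreover have "isCont (\<lambda>z. - z / w) z" using assms(2) by (intro continuous_intros) auto
  ultimately show "isCont (\<lambda>z. Arg (- z / w)) z" using isCont_o2 by blast
qed

text \<open>A connected subset of the circle through \<open>cis_turn u\<close> and \<open>cis_turn v\<close> contains one of the
  two arcs between them: if it missed a point of each, the argument seen from a missed point \<open>w\<close> of
  the second arc would be a continuous real function on it taking values on both sides of the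
  value at the missed point of the first arc, without taking that value.\<close>

lemma connected_circle_contains_arc:
  assumes K: "connected K" "K \<subseteq> circle" and uv: "0 \<le> u" "u \<le> v" "v < 1"
    and in_K: "cis_turn u \<in> K" "cis_turn v \<in> K"
  shows "cis_turn ` {u..v} \<subseteq> K \<or> cis_turn ` {v..1} \<union> cis_turn ` {0..u} \<subseteq> K"
proof (rule ccontr)
  assume "\<not> ?thesis"
  then obtain s1 s2 where s1: "s1 \<in> {u..v}" "cis_turn s1 \<notin> K"
    and s2: "s2 \<in> {v..1} \<union> {0..u}" "cis_turn s2 \<notin> K"
    by blast
  have s1': "u < s1" "s1 < v" using s1 in_K by (auto simp: le_less)
  obtain s where s: "s \<in> {v<..<1} \<union> {0..<u}" "cis_turn s \<notin> K"
  proof (cases "s2 = 1")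
    case True
    then have "cis_turn 0 \<notin> K" using s2 cis_turn_1 by simp
    then show ?thesis using that[of 0] in_K uv by (cases "u = 0") auto
  next
    case False
    then have "s2 \<noteq> v" "s2 \<noteq> u" using s2 in_K by auto
    then show ?thesis using that[of s2] s2 False by auto
  qed
  define \<Phi> where "\<Phi> z = Arg (- z / cis_turn s)" for z
  have "continuous_on K \<Phi>"
    unfolding \<Phi>_def by (rule continuous_on_Arg_minus_divide) (use K s in auto)
  then have "connected (\<Phi> ` K)" by (rule connected_continuous_image[OF _ K(1)])
  moreover have "\<Phi> (cis_turn u) \<in> \<Phi> ` K" "\<Phi> (cis_turn v) \<in> \<Phi> ` K" using in_K by auto
  ultimately have "{\<Phi> (cis_turn u)..\<Phi> (cis_turn v)} \<subseteq> \<Phi> ` K" by (rule connected_contains_Icc)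
  moreover have "\<exists>c. \<forall>t \<in> {u, s1, v}. \<Phi> (cis_turn t) = 2 * pi * t + c"
  proof (cases "s \<in> {v<..<1}")
    case True
    then have "\<Phi> (cis_turn t) = 2 * pi * t + (pi - 2 * pi * s)" if "t \<in> {u, s1, v}" for t
      using that uv s1' Arg_minus_cis_turn_divide(1)[of t s] by (auto simp: \<Phi>_def algebra_simps)
    then show ?thesis by blast
  next
    case False
    then have "\<Phi> (cis_turn t) = 2 * pi * t + (- pi - 2 * pi * s)" if "t \<in> {u, s1, v}" for t
      using that uv s1' s Arg_minus_cis_turn_divide(2)[of t s] by (auto simp: \<Phi>_def algebra_simps)
    then show ?thesis by blast
  qed
  then have "\<Phi> (cis_turn s1) \<in> {\<Phi> (cis_turn u)..\<Phi> (cis_turn v)}" using s1' pi_gt_zero by auto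
  ultimately obtain z where z: "z \<in> K" "\<Phi> z = \<Phi> (cis_turn s1)" by auto
  have "- z / cis_turn s = - cis_turn s1 / cis_turn s"
    by (rule Arg_inj_on_circle) (use z K in \<open>auto simp: \<Phi>_def norm_divide mem_circle_iff\<close>)
  moreover have "cis_turn s \<noteq> 0" by (metis norm_cis_turn norm_zero zero_neq_one)
  ultimately have "z = cis_turn s1" by (simp add: field_simps)
  then show False using z s1 by auto
qed

locale averaged_pushforward_circle = averaged_pushforward cis_turn circle I w \<rho> \<rho>' i0
  for I :: "'i set" and w \<rho> \<rho>' i0
begin

definition straighten :: "complex \<Rightarrow> complex" where
  "straighten z = cis_turn (ncdf (turn z))"

lemma straighten_cis_turn: "0 \<le> t \<Longrightarrow> t \<le> 1 \<Longrightarrow> straighten (cis_turn t) = cis_turn (ncdf t)"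
  using cis_turn_1 turn_cis_turn[of 0] turn_cis_turn[of t] ncdf_0 ncdf_1
  by (cases "t = 1") (auto simp: straighten_def)

lemma straighten_homeomorphism: "\<exists>h'. homeomorphism circle circle straighten h'"
proof (rule homeomorphism_compact)
  show "compact circle" by (rule circle_param.compact_M)
  have "continuous_on {0..1} (cis_turn \<circ> ncdf)"
    by (intro continuous_on_compose continuous_on_ncdf continuous_intros)
  moreover have "(cis_turn \<circ> ncdf) t = (straighten \<circ> cis_turn) t" if "t \<in> {0..1}" for t
    using that by (simp add: straighten_cis_turn)
  ultimately have "continuous_on {0..1} (straighten \<circ> cis_turn)"
    using continuous_on_cong by blast
  then show "continuous_on circle straighten"
    by (rule continuous_on_through_quotient[OF compact_Icc continuous_on_cis_turn cis_turn_image])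
  have "straighten ` circle = straighten ` cis_turn ` {0..1}" by (simp add: cis_turn_image)
  also have "\<dots> = cis_turn ` ncdf ` {0..1}"
    by (auto simp: image_image straighten_cis_turn intro!: image_cong)
  finally show "straighten ` circle = circle" by (simp add: ncdf_image cis_turn_image)
  show "inj_on straighten circle"
  proof (rule inj_onI)
    fix z z' assume zz: "z \<in> circle" "z' \<in> circle" "straighten z = straighten z'"
    have "ncdf (turn q) \<in> {0..<1}" for q
      using ncdf_strict_mono[of "turn q" 1] ncdf_1 ncdf_bounds[of "turn q"] turn_bounds[of q] by simp
    then have "ncdf (turn z) = ncdf (turn z')"
      using zz(3) cis_turn_inj unfolding straighten_def by blast
    then have "turn z = turn z'"
      using inj_on_ncdf turn_bounds[of z] turn_bounds[of z'] unfolding inj_on_def by auto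
    then show "z = z'" using cis_turn_turn zz by metis
  qed
qed

lemma circ_dist_cis_turn_ncdf:
  assumes ab: "0 \<le> a" "a \<le> b" "b \<le> 1"
  shows "circ_dist (cis_turn (ncdf a)) (cis_turn (ncdf b)) =
         2 * pi * min (mu (cis_turn`{a..b}) / mu circle)
                      (mu (cis_turn`{b..1} \<union> cis_turn`{0..a}) / mu circle)"
proof -
  have "ncdf a \<le> ncdf b" using ncdf_mono ab by auto
  then have "\<bar>ncdf a - ncdf b\<bar> = mu (cis_turn`{a..b}) / mu circle" using ncdf_diff[OF ab] by simp
  moreover have "1 - \<bar>ncdf a - ncdf b\<bar> = (ncdf 1 - ncdf b) + (ncdf a - ncdf 0)"
    using \<open>ncdf a \<le> ncdf b\<close> ncdf_0 ncdf_1 by simp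
  then have "1 - \<bar>ncdf a - ncdf b\<bar> = mu (cis_turn`{b..1} \<union> cis_turn`{0..a}) / mu circle"
    using ncdf_diff[of b 1] ncdf_diff[of 0 a] mu_complementary_arcs[OF ab] ab
    by (simp add: add_divide_distrib)
  ultimately show ?thesis using circ_dist_cis_turn ncdf_bounds ab by simp
qed

lemma circ_dist_ncdf_le_mu:
  assumes uv: "u \<in> {0..<1}" "v \<in> {0..<1}" and K: "closed K" "connected K" "K \<subseteq> circle"
    and in_K: "cis_turn u \<in> K" "cis_turn v \<in> K"
  shows "circ_dist (cis_turn (ncdf u)) (cis_turn (ncdf v)) \<le> 2 * pi * (mu K / mu circle)"
proof -
  have le: "mu A / mu circle \<le> mu K / mu circle" if "A \<subseteq> K" "closed A" for A
    using mu_mono[OF K(1) that] mu_M_pos by (simp add: divide_right_mono)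
  have ordered: "circ_dist (cis_turn (ncdf u)) (cis_turn (ncdf v)) \<le> 2 * pi * (mu K / mu circle)"
    if uv: "0 \<le> u" "u \<le> v" "v < 1" and in_K: "cis_turn u \<in> K" "cis_turn v \<in> K" for u v
  proof -
    have "closed (cis_turn`{u..v})" "closed (cis_turn`{v..1} \<union> cis_turn`{0..u})"
      using uv by (auto intro!: closed_Un closed_arc)
    then consider "mu (cis_turn`{u..v}) / mu circle \<le> mu K / mu circle"
      | "mu (cis_turn`{v..1} \<union> cis_turn`{0..u}) / mu circle \<le> mu K / mu circle"
      using connected_circle_contains_arc[OF K(2,3) uv in_K] le by blast
    then have "min (mu (cis_turn`{u..v}) / mu circle) (mu (cis_turn`{v..1} \<union> cis_turn`{0..u}) / mu circle)
                 \<le> mu K / mu circle"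
      by cases (simp_all add: min_le_iff_disj)
    then show ?thesis
      unfolding circ_dist_cis_turn_ncdf[OF uv(1,2) less_imp_le[OF uv(3)]]
      using pi_gt_zero by (intro mult_left_mono) auto
  qed
  show ?thesis
  proof (cases "u \<le> v")
    case True
    then show ?thesis using ordered uv in_K by simp
  next
    case False
    then show ?thesis using ordered[of v u] uv in_K by (simp add: circ_dist_commute)
  qed
qed

lemma circ_dist_straighten_image_le:
  assumes T: "homeomorphism circle circle T T'" and shift: "shifts_weighted_family I w \<rho> circle e T"
    and A: "compact A" "connected A" "A \<subseteq> circle" "p \<in> A" "q \<in> A"
  shows "circ_dist (straighten (T p)) (straighten (T q)) \<le> exp e * (2 * pi * (mu A / mu circle))"
proof -
  let ?K = "T ` A"
  have "continuous_on A T" using T A(3) homeomorphism_cont1 continuous_on_subset by blast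
  then have K: "closed ?K" "connected ?K" "?K \<subseteq> circle"
    using A T by (auto intro: connected_continuous_image compact_continuous_image compact_imp_closed
        dest: homeomorphism_image1)
  have "T p \<in> ?K" "T q \<in> ?K" using A by auto
  then have "cis_turn (turn (T p)) \<in> ?K" "cis_turn (turn (T q)) \<in> ?K"
    using K(3) cis_turn_turn by (auto simp: subset_iff)
  then have "circ_dist (straighten (T p)) (straighten (T q)) \<le> 2 * pi * (mu ?K / mu circle)"
    unfolding straighten_def using circ_dist_ncdf_le_mu[OF _ _ K] turn_bounds by simp
  also have "\<dots> \<le> exp e * (2 * pi * (mu A / mu circle))"
    using mu_image_le[OF T shift compact_imp_closed[OF A(1)] A(3)] mu_M_pos pi_gt_zero
    by (simp add: divide_right_mono mult.left_commute)
  finally show ?thesis .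
qed

lemma straighten_conj_lipschitz:
  assumes h: "homeomorphism circle circle straighten h'"
    and T: "homeomorphism circle circle T T'"
    and shift: "shifts_weighted_family I w \<rho> circle e T"
  shows "lipschitz_wrt circ_dist circle (exp e) (straighten \<circ> T \<circ> h')"
proof (rule lipschitz_wrt_by_order[where key = "\<lambda>x. turn (h' x)"])
  show "(straighten \<circ> T \<circ> h') ` circle \<subseteq> circle"
    using h T unfolding homeomorphism_def by (metis image_comp order_refl)
  fix x y assume x: "x \<in> circle" and y: "y \<in> circle" and le: "turn (h' x) \<le> turn (h' y)"
  define a where "a = turn (h' x)"
  define b where "b = turn (h' y)"
  have ab: "0 \<le> a" "a \<le> b" "b < 1" using le turn_bounds by (auto simp: a_def b_def)
  have "h' x \<in> circle" "h' y \<in> circle" using h x y homeomorphism_image2 by blast+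
  then have h'_ab: "h' x = cis_turn a" "h' y = cis_turn b" using cis_turn_turn by (auto simp: a_def b_def)
  have "x = straighten (h' x)" "y = straighten (h' y)" using h x y by (auto simp: homeomorphism_apply2)
  then have "x = cis_turn (ncdf a)" "y = cis_turn (ncdf b)" using straighten_cis_turn ab by (auto simp: h'_ab)
  then have dist_xy: "circ_dist x y = 2 * pi * min (mu (cis_turn`{a..b}) / mu circle)
                        (mu (cis_turn`{b..1} \<union> cis_turn`{0..a}) / mu circle)"
    using circ_dist_cis_turn_ncdf ab by simp
  let ?bound = "circ_dist (straighten (T (h' x))) (straighten (T (h' y)))"
  have "compact (cis_turn`{a..b})" "connected (cis_turn`{a..b})"
    by (auto intro!: compact_continuous_image connected_continuous_image continuous_intros)
  then have bound_1: "?bound \<le> exp e * (2 * pi * (mu (cis_turn`{a..b}) / mu circle))"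
    using ab by (intro circ_dist_straighten_image_le[OF T shift]) (auto simp: h'_ab)
  have "compact (cis_turn`{b..1} \<union> cis_turn`{0..a})"
    by (auto intro!: compact_continuous_image continuous_intros)
  moreover have "connected (cis_turn`{b..1} \<union> cis_turn`{0..a})"
  proof (rule connected_Un)
    show "connected (cis_turn`{b..1})" "connected (cis_turn`{0..a})"
      by (auto intro!: connected_continuous_image continuous_intros)
    have "cis_turn 1 \<in> cis_turn`{b..1}" "cis_turn 0 \<in> cis_turn`{0..a}" using ab by auto
    then show "cis_turn`{b..1} \<inter> cis_turn`{0..a} \<noteq> {}" using cis_turn_1 by auto
  qed
  ultimately have bound_2: "?bound \<le> exp e * (2 * pi * (mu (cis_turn`{b..1} \<union> cis_turn`{0..a}) / mu circle))"
    using ab by (intro circ_dist_straighten_image_le[OF T shift]) (auto simp: h'_ab)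
  show "circ_dist ((straighten \<circ> T \<circ> h') x) ((straighten \<circ> T \<circ> h') y) \<le> exp e * circ_dist x y"
    using bound_1 bound_2 unfolding dist_xy by (simp add: min_mult_distrib_left)
qed (rule circ_dist_commute)

end

section \<open>Straightening a weighted family\<close>

lemma exists_lipschitz_straightening:
  fixes I :: "'i set" and \<rho> \<rho>' :: "'i \<Rightarrow> complex \<Rightarrow> complex"
  assumes M: "cc_one_manifold M d"
    and homeo: "\<And>i. i\<in>I \<Longrightarrow> homeomorphism M M (\<rho> i) (\<rho>' i)"
    and weight_nonneg: "\<And>i. i\<in>I \<Longrightarrow> 0 \<le> w i" and weight_summable: "w summable_on I"
    and identity: "j \<in> I" "w j > 0" "\<And>x. x\<in>M \<Longrightarrow> \<rho> j x = x"
  shows "\<exists>h h'. homeomorphism M M h h' \<and>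
           (\<forall>T T' e. homeomorphism M M T T' \<and> shifts_weighted_family I w \<rho> M e T
               \<longrightarrow> lipschitz_wrt d M (exp e) (h \<circ> T \<circ> h'))"
  using M unfolding cc_one_manifold_def
proof (elim disjE conjE)
  assume Md: "M = unit_interval_c" "d = dist"
  interpret averaged_pushforward_interval I w \<rho> \<rho>' j
    by unfold_locales (use homeo weight_nonneg weight_summable identity Md in auto)
  obtain h' where "homeomorphism unit_interval_c unit_interval_c straighten h'"
    using straighten_homeomorphism by blast
  then show ?thesis unfolding Md using straighten_conj_lipschitz by blast
next
  assume Md: "M = circle" "d = circ_dist"
  interpret averaged_pushforward_circle I w \<rho> \<rho>' j
    by unfold_locales (use homeo weight_nonneg weight_summable identity Md in auto)
  obtain h' where "homeomorphism circle circle straighten h'"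
    using straighten_homeomorphism by blast
  then show ?thesis unfolding Md using straighten_conj_lipschitz by blast
qed

section \<open>Groups of subexponential growth\<close>

context group
begin

lemma foldr_mult_closed: "set ws \<subseteq> carrier G \<Longrightarrow> foldr (\<otimes>) ws \<one> \<in> carrier G"
  by (induction ws) auto

lemma foldr_mult_append:
  "set xs \<subseteq> carrier G \<Longrightarrow> set ys \<subseteq> carrier G \<Longrightarrow>
     foldr (\<otimes>) (xs @ ys) \<one> = foldr (\<otimes>) xs \<one> \<otimes> foldr (\<otimes>) ys \<one>"
  by (induction xs) (auto simp: m_assoc foldr_mult_closed)

lemma generate_imp_word:
  assumes "S \<subseteq> carrier G" "\<forall>s\<in>S. inv s \<in> S" "g \<in> generate G S"
  shows "\<exists>ws. set ws \<subseteq> S \<and> foldr (\<otimes>) ws \<one> = g"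
  using assms(3)
proof (induction rule: generate.induct)
  case one
  then show ?case by (intro exI[of _ "[]"]) auto
next
  case (incl h)
  then show ?case using assms(1) by (intro exI[of _ "[h]"]) auto
next
  case (inv h)
  then show ?case using assms(1,2) by (intro exI[of _ "[inv h]"]) auto
next
  case (eng h1 h2)
  then obtain ws1 ws2 where "set ws1 \<subseteq> S" "foldr (\<otimes>) ws1 \<one> = h1" "set ws2 \<subseteq> S" "foldr (\<otimes>) ws2 \<one> = h2"
    by blast
  moreover have "foldr (\<otimes>) (ws1 @ ws2) \<one> = foldr (\<otimes>) ws1 \<one> \<otimes> foldr (\<otimes>) ws2 \<one>"
    by (rule foldr_mult_append) (use calculation assms(1) in auto)
  ultimately show ?case by (intro exI[of _ "ws1 @ ws2"]) auto
qed

lemma word_length_le: "set ws \<subseteq> S \<Longrightarrow> foldr (\<otimes>) ws \<one> = g \<Longrightarrow> word_length G S g \<le> length ws"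
  unfolding word_length_def by (rule Least_le) blast

end

locale symmetric_generating_set = group G for G :: "('g, 'b) monoid_scheme" (structure) +
  fixes S
  assumes finite_S: "finite S" and S_carrier: "S \<subseteq> carrier G" and S_inv: "\<forall>s\<in>S. inv s \<in> S"
    and generate_S: "generate G S = carrier G"
begin

lemma minimal_word:
  assumes "g \<in> carrier G"
  shows "\<exists>ws. set ws \<subseteq> S \<and> length ws = word_length G S g \<and> foldr (\<otimes>) ws \<one> = g"
  unfolding word_length_def
  by (rule LeastI_ex) (use generate_imp_word[OF S_carrier S_inv] generate_S assms in blast)

lemma word_length_inv_mult_le:
  assumes "s \<in> S" "g \<in> carrier G"
  shows "word_length G S (inv s \<otimes> g) \<le> word_length G S g + 1"
proof -
  obtain ws where ws: "set ws \<subseteq> S" "length ws = word_length G S g" "foldr (\<otimes>) ws \<one> = g"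
    using minimal_word[OF assms(2)] by blast
  have "word_length G S (inv s \<otimes> g) \<le> length (inv s # ws)"
    by (rule word_length_le) (use ws S_inv assms(1) in auto)
  then show ?thesis using ws by simp
qed

lemma finite_word_ball: "finite (word_ball G S n)"
proof -
  have "word_ball G S n \<subseteq> (\<lambda>ws. foldr (\<otimes>) ws \<one>) ` {ws. set ws \<subseteq> S \<and> length ws \<le> n}"
  proof
    fix g assume "g \<in> word_ball G S n"
    then have g: "g \<in> carrier G" "word_length G S g \<le> n" by (auto simp: word_ball_def)
    then obtain ws where "set ws \<subseteq> S" "length ws = word_length G S g" "foldr (\<otimes>) ws \<one> = g"
      using minimal_word by blast
    then show "g \<in> (\<lambda>ws. foldr (\<otimes>) ws \<one>) ` {ws. set ws \<subseteq> S \<and> length ws \<le> n}" using g by force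
  qed
  then show ?thesis using finite_lists_length_le[OF finite_S] by (meson finite_imageI finite_subset)
qed

lemma card_word_ball_ge_1: "card (word_ball G S n) \<ge> 1"
proof -
  have "word_length G S \<one> \<le> length ([] :: 'g list)" by (rule word_length_le) auto
  then have "\<one> \<in> word_ball G S n" by (simp add: word_ball_def)
  then show ?thesis using finite_word_ball by (metis Suc_leI card_gt_0_iff empty_iff One_nat_def)
qed

lemma summable_card_word_ball_exp:
  assumes growth: "(\<lambda>n. ln (real (card (word_ball G S n))) / real n) \<longlonglongrightarrow> 0" and "e > 0"
  shows "summable (\<lambda>n. real (card (word_ball G S n)) * exp (- e * real n))"
proof -
  define c where "c n = real (card (word_ball G S n))" for n
  have c_ge_1: "c n \<ge> 1" for n using card_word_ball_ge_1[of n] by (simp add: c_def)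
  obtain N where N: "\<And>n. n \<ge> N \<Longrightarrow> \<bar>ln (c n) / real n\<bar> < e/2"
    using growth \<open>e > 0\<close> unfolding c_def LIMSEQ_def dist_real_def
    by (metis abs_minus_commute diff_zero half_gt_zero)
  have "summable (\<lambda>n::nat. exp (- (e/2)) ^ n)" using \<open>e > 0\<close> by (intro summable_geometric) auto
  then have geometric: "summable (\<lambda>n::nat. exp (- (e/2) * real n))"
    by (simp add: exp_of_nat_mult[symmetric] mult.commute)
  have "norm (c n * exp (- e * real n)) \<le> exp (- (e/2) * real n)" if n: "n \<ge> Suc N" for n
  proof -
    have "ln (c n) / real n < e/2" using N[of n] n by linarith
    then have "ln (c n) < e/2 * real n" using n by (simp add: divide_less_eq)
    then have "c n < exp (e/2 * real n)" using c_ge_1[of n] by (metis exp_less_mono exp_ln less_le_trans zero_less_one)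
    then have "c n * exp (- e * real n) \<le> exp (e/2 * real n) * exp (- e * real n)"
      by (intro mult_right_mono) auto
    also have "\<dots> = exp (- (e/2) * real n)" by (simp add: exp_add[symmetric] algebra_simps)
    finally show ?thesis using c_ge_1[of n] by simp
  qed
  then show ?thesis unfolding c_def[symmetric] by (rule summable_comparison_test'[OF geometric])
qed

lemma summable_on_exp_word_length:
  assumes growth: "(\<lambda>n. ln (real (card (word_ball G S n))) / real n) \<longlonglongrightarrow> 0" and "e > 0"
  shows "(\<lambda>g. exp (- e * real (word_length G S g))) summable_on carrier G"
proof (rule nonneg_bdd_above_summable_on)
  let ?l = "word_length G S" and ?c = "\<lambda>n. real (card (word_ball G S n)) * exp (- e * real n)"
  have sum_ball: "(\<Sum>g\<in>word_ball G S N. exp (- e * real (?l g))) \<le> suminf ?c" for N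
  proof -
    let ?B = "word_ball G S N"
    have "(\<Sum>g\<in>?B. exp (- e * real (?l g))) = (\<Sum>g\<in>?B. \<Sum>n\<le>N. if ?l g = n then exp (- e * real n) else 0)"
      by (intro sum.cong refl) (auto simp: word_ball_def sum.delta)
    also have "\<dots> = (\<Sum>n\<le>N. real (card {g\<in>?B. ?l g = n}) * exp (- e * real n))"
      by (subst sum.swap) (simp add: sum.If_cases finite_word_ball Int_def conj_commute)
    also have "\<dots> \<le> (\<Sum>n\<le>N. ?c n)"
    proof (rule sum_mono)
      fix n
      have "{g\<in>?B. ?l g = n} \<subseteq> word_ball G S n" by (auto simp: word_ball_def)
      then show "real (card {g\<in>?B. ?l g = n}) * exp (- e * real n) \<le> ?c n"
        using card_mono[OF finite_word_ball] by simp
    qed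
    also have "\<dots> \<le> suminf ?c"
      by (rule sum_le_suminf[OF summable_card_word_ball_exp[OF growth \<open>e > 0\<close>]]) auto
    finally show ?thesis .
  qed
  show "bdd_above (sum (\<lambda>g. exp (- e * real (?l g))) ` {F. F \<subseteq> carrier G \<and> finite F})"
  proof (rule bdd_aboveI)
    fix x assume "x \<in> sum (\<lambda>g. exp (- e * real (?l g))) ` {F. F \<subseteq> carrier G \<and> finite F}"
    then obtain F where F: "F \<subseteq> carrier G" "finite F" "x = (\<Sum>g\<in>F. exp (- e * real (?l g)))" by auto
    define N where "N = Max (insert 0 (?l ` F))"
    have "F \<subseteq> word_ball G S N" using F unfolding word_ball_def N_def by auto
    then have "x \<le> (\<Sum>g\<in>word_ball G S N. exp (- e * real (?l g)))"
      unfolding F(3) by (rule sum_mono2[OF finite_word_ball]) auto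
    then show "x \<le> suminf ?c" using sum_ball[of N] by linarith
  qed
qed auto

text \<open>Left multiplication by \<open>s\<^sup>-\<^sup>1\<close> changes word lengths by at most one, hence changes the weight
  \<open>exp (- e * |g|)\<close> by a factor at most \<open>exp e\<close>.\<close>

lemma generator_shifts_weighted_family:
  assumes act: "\<forall>g\<in>carrier G. \<forall>h\<in>carrier G. \<forall>x\<in>M. \<rho> (g \<otimes> h) x = \<rho> g (\<rho> h x)"
    and "s \<in> S" "e > 0"
  shows "shifts_weighted_family (carrier G) (\<lambda>g. exp (- e * real (word_length G S g))) \<rho> M e (\<rho> s)"
  unfolding shifts_weighted_family_def
proof (intro exI conjI ballI)
  have s: "s \<in> carrier G" "inv s \<in> carrier G" using \<open>s \<in> S\<close> S_carrier by auto
  show "bij_betw (\<lambda>g. inv s \<otimes> g) (carrier G) (carrier G)"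
    by (rule bij_betwI[of _ _ _ "\<lambda>g. s \<otimes> g"]) (use s in \<open>auto simp: m_assoc[symmetric]\<close>)
  fix g assume g: "g \<in> carrier G"
  show "\<rho> s (\<rho> (inv s \<otimes> g) x) = \<rho> g x" if "x \<in> M" for x
  proof -
    have "\<rho> s (\<rho> (inv s \<otimes> g) x) = \<rho> (s \<otimes> (inv s \<otimes> g)) x" using act s g that by simp
    also have "s \<otimes> (inv s \<otimes> g) = g" using s g by (simp add: m_assoc[symmetric])
    finally show ?thesis .
  qed
  have "e * real (word_length G S (inv s \<otimes> g)) \<le> e * (real (word_length G S g) + 1)"
    using word_length_inv_mult_le[OF \<open>s \<in> S\<close> g] \<open>e > 0\<close> by (intro mult_left_mono) auto
  then show "exp (- e * real (word_length G S g)) \<le> exp e * exp (- e * real (word_length G S (inv s \<otimes> g)))"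
    by (simp add: exp_add[symmetric] algebra_simps)
qed

end

theorem subexponential_growth_conj_lipschitz:
  fixes G :: "('g, 'b) monoid_scheme" and \<rho> :: "'g \<Rightarrow> complex \<Rightarrow> complex"
  assumes "symmetric_generating_set G S" and M: "cc_one_manifold M d"
    and homs: "\<forall>g\<in>carrier G. \<exists>g'. homeomorphism M M (\<rho> g) g'"
    and act: "\<forall>g\<in>carrier G. \<forall>h\<in>carrier G. \<forall>x\<in>M. \<rho> (g \<otimes>\<^bsub>G\<^esub> h) x = \<rho> g (\<rho> h x)"
    and one: "\<forall>x\<in>M. \<rho> \<one>\<^bsub>G\<^esub> x = x"
    and growth: "(\<lambda>n. ln (real (card (word_ball G S n))) / real n) \<longlonglongrightarrow> 0"
    and "e > 0"
  shows "\<exists>h h'. homeomorphism M M h h' \<and> (\<forall>s\<in>S. lipschitz_wrt d M (exp e) (h \<circ> \<rho> s \<circ> h'))"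
proof -
  interpret symmetric_generating_set G S by fact
  obtain \<rho>' where homeo: "\<And>g. g \<in> carrier G \<Longrightarrow> homeomorphism M M (\<rho> g) (\<rho>' g)"
    using homs by metis
  let ?w = "\<lambda>g. exp (- e * real (word_length G S g))"
  have "\<exists>h h'. homeomorphism M M h h' \<and>
      (\<forall>T T' e'. homeomorphism M M T T' \<and> shifts_weighted_family (carrier G) ?w \<rho> M e' T
         \<longrightarrow> lipschitz_wrt d M (exp e') (h \<circ> T \<circ> h'))"
    by (rule exists_lipschitz_straightening[where j = "\<one>\<^bsub>G\<^esub>"])
       (use M homeo summable_on_exp_word_length[OF growth \<open>e > 0\<close>] one in auto)
  then obtain h h' where h: "homeomorphism M M h h'" and lip:
    "\<forall>T T' e'. homeomorphism M M T T' \<and> shifts_weighted_family (carrier G) ?w \<rho> M e' T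
         \<longrightarrow> lipschitz_wrt d M (exp e') (h \<circ> T \<circ> h')"
    by blast
  have "lipschitz_wrt d M (exp e) (h \<circ> \<rho> s \<circ> h')" if "s \<in> S" for s
    using lip homeo[of s] generator_shifts_weighted_family[OF act that \<open>e > 0\<close>] that S_carrier
    by blast
  then show ?thesis using h by blast
qed

section \<open>Circle homeomorphisms\<close>

lemma homeomorphism_funpow: "homeomorphism S S f g \<Longrightarrow> homeomorphism S S (f ^^ n) (g ^^ n)"
proof (induction n)
  case 0
  then show ?case using homeomorphism_ident by (simp add: id_def)
next
  case (Suc n)
  have "homeomorphism S S (f \<circ> f ^^ n) (g ^^ n \<circ> g)"
    by (rule homeomorphism_compose[OF Suc.IH[OF Suc.prems] Suc.prems])
  moreover have "f ^^ Suc n = f \<circ> f ^^ n" "g ^^ Suc n = g ^^ n \<circ> g"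
    by (rule funpow.simps(2), rule funpow_Suc_right)
  ultimately show ?case by metis
qed

definition int_iterate :: "('a \<Rightarrow> 'a) \<Rightarrow> ('a \<Rightarrow> 'a) \<Rightarrow> int \<Rightarrow> 'a \<Rightarrow> 'a" where
  "int_iterate f f' n = (if 0 \<le> n then f ^^ nat n else f' ^^ nat (- n))"

lemma homeomorphism_int_iterate:
  "homeomorphism S S f f' \<Longrightarrow> homeomorphism S S (int_iterate f f' n) (int_iterate f' f n)"
  using homeomorphism_funpow[of S f f'] homeomorphism_funpow[of S f' f] homeomorphism_sym[of S S f f']
  by (auto simp: int_iterate_def)

lemma int_iterate_step:
  assumes "homeomorphism S S f f'" "x \<in> S"
  shows "f (int_iterate f f' (n - 1) x) = int_iterate f f' n x"
proof (cases "1 \<le> n")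
  case True
  then have "nat n = Suc (nat (n - 1))" by simp
  then show ?thesis using True by (simp add: int_iterate_def)
next
  case False
  have "(f' ^^ nat (- n)) x \<in> S"
    using homeomorphism_funpow[OF homeomorphism_symD[OF assms(1)], of "nat (-n)"] assms(2)
      homeomorphism_image1 by blast
  then have "f (f' ((f' ^^ nat (- n)) x)) = (f' ^^ nat (- n)) x"
    using assms(1) homeomorphism_apply2 by metis
  moreover have "nat (1 - n) = Suc (nat (- n))" using False by simp
  ultimately show ?thesis using False by (simp add: int_iterate_def)
qed

lemma summable_on_exp_abs_int: "e > 0 \<Longrightarrow> (\<lambda>n::int. exp (- e * \<bar>real_of_int n\<bar>)) summable_on UNIV"
proof -
  assume "e > 0"
  let ?g = "\<lambda>n::int. exp (- e * \<bar>real_of_int n\<bar>)"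
  have "summable (\<lambda>k::nat. exp (- e) ^ k)" using \<open>e > 0\<close> by (intro summable_geometric) auto
  then have geometric: "summable (\<lambda>k::nat. exp (- e * real k))"
    by (simp add: exp_of_nat_mult[symmetric] mult.commute)
  have "(?g \<circ> int) summable_on UNIV"
    using geometric by (subst summable_on_UNIV_nonneg_real_iff) (auto simp: o_def)
  then have nonneg: "?g summable_on range int" by (subst summable_on_reindex) auto
  have "(?g \<circ> (\<lambda>k. - int k)) summable_on UNIV"
    using geometric by (subst summable_on_UNIV_nonneg_real_iff) (auto simp: o_def)
  then have nonpos: "?g summable_on range (\<lambda>k. - int k)"
    by (subst summable_on_reindex) (auto simp: inj_on_def)
  have "n \<in> range int \<union> range (\<lambda>k. - int k)" for n :: int
    by (cases "0 \<le> n") (auto intro: image_eqI[of n int "nat n"] image_eqI[of n "\<lambda>k. - int k" "nat (- n)"])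
  then have "UNIV = range int \<union> range (\<lambda>k. - int k)" by auto
  then show ?thesis using summable_on_union[OF nonneg nonpos] by metis
qed

lemma circle_homeomorphism_conj_lipschitz:
  assumes f: "homeomorphism circle circle f f'" and "e > 0"
  shows "\<exists>h h'. homeomorphism circle circle h h' \<and> lipschitz_wrt circ_dist circle (exp e) (h \<circ> f \<circ> h')"
proof -
  let ?w = "\<lambda>n::int. exp (- e * \<bar>real_of_int n\<bar>)"
  have "shifts_weighted_family UNIV ?w (int_iterate f f') circle e f"
    unfolding shifts_weighted_family_def
  proof (intro exI conjI ballI)
    show "bij_betw (\<lambda>n::int. n - 1) UNIV UNIV"
      by (rule bij_betwI[of _ _ _ "\<lambda>n. n + 1"]) auto
    show "f (int_iterate f f' (n - 1) x) = int_iterate f f' n x" if "x \<in> circle" for n x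
      using int_iterate_step[OF f that] .
    fix n :: int
    have "e * \<bar>real_of_int (n - 1)\<bar> \<le> e * (\<bar>real_of_int n\<bar> + 1)"
      using \<open>e > 0\<close> by (intro mult_left_mono) auto
    then show "?w n \<le> exp e * ?w (n - 1)" by (simp add: exp_add[symmetric] algebra_simps)
  qed
  moreover have "\<exists>h h'. homeomorphism circle circle h h' \<and>
      (\<forall>T T' e'. homeomorphism circle circle T T' \<and> shifts_weighted_family UNIV ?w (int_iterate f f') circle e' T
         \<longrightarrow> lipschitz_wrt circ_dist circle (exp e') (h \<circ> T \<circ> h'))"
    by (rule exists_lipschitz_straightening[where j = 0 and \<rho>' = "int_iterate f' f"])
       (use homeomorphism_int_iterate[OF f] summable_on_exp_abs_int[OF \<open>e > 0\<close>] in
         \<open>auto simp: cc_one_manifold_def int_iterate_def[of _ _ 0]\<close>)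
  ultimately show ?thesis using f by blast
qed

section \<open>Entropy\<close>

lemma card_separated_real_le:
  fixes T :: "real set"
  assumes "finite T" "T \<subseteq> {a..b}" "\<forall>x\<in>T. \<forall>y\<in>T. x \<noteq> y \<longrightarrow> r \<le> \<bar>x - y\<bar>" "r > 0" "a \<le> b"
  shows "real (card T) \<le> (b - a) / r + 1"
  using assms
proof (induction "card T" arbitrary: T b)
  case 0
  then show ?case by (simp add: divide_nonneg_pos)
next
  case (Suc n)
  define m where "m = Max T"
  define T' where "T' = T - {m}"
  have "T \<noteq> {}" using Suc by auto
  then have m: "m \<in> T" "m \<le> b" using Suc by (auto simp: m_def)
  have card_T': "n = card T'" using Suc m by (simp add: T'_def)
  show ?case
  proof (cases "T' = {}")
    case True
    then have "card T = 1" using card_T' Suc(2) by simp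
    then show ?thesis using Suc(6,7) by (simp add: divide_nonneg_pos)
  next
    case False
    have sub: "T' \<subseteq> {a..m - r}"
    proof
      fix x assume "x \<in> T'"
      then have x: "x \<in> T" "x \<noteq> m" by (auto simp: T'_def)
      moreover have "x \<le> m" using x Suc(3) by (simp add: m_def)
      ultimately have "r \<le> m - x" using Suc(5) m by force
      then show "x \<in> {a..m - r}" using x Suc(4) by auto
    qed
    then have "a \<le> m - r" using False by fastforce
    have "real (card T') \<le> (m - r - a) / r + 1"
      by (rule Suc.hyps(1)[OF card_T']) (use Suc sub \<open>a \<le> m - r\<close> in \<open>auto simp: T'_def\<close>)
    moreover have "(m - r - a) / r + 1 = (m - a) / r" using Suc(6) by (simp add: field_simps)
    moreover have "(m - a) / r \<le> (b - a) / r" using m Suc(6) by (simp add: divide_right_mono)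
    ultimately show ?thesis using card_T' Suc(2) by simp
  qed
qed

lemma card_separated_circle_le:
  assumes "finite P" "P \<subseteq> circle" "\<forall>z\<in>P. \<forall>w\<in>P. z \<noteq> w \<longrightarrow> r \<le> circ_dist z w" "r > 0"
  shows "real (card P) \<le> 2 * pi / r + 1"
proof -
  have inj: "inj_on turn P"
    by (rule inj_onI) (metis assms(2) cis_turn_turn subsetD)
  have "r / (2 * pi) \<le> \<bar>x - y\<bar>" if xy: "x \<in> turn`P" "y \<in> turn`P" "x \<noteq> y" for x y
  proof -
    obtain z w where zw: "z \<in> P" "w \<in> P" "x = turn z" "y = turn w" using xy by auto
    then have "r \<le> circ_dist z w" using assms xy by auto
    also have "\<dots> = circ_dist (cis_turn x) (cis_turn y)"
      using zw assms(2) cis_turn_turn[of z] cis_turn_turn[of w] by (simp add: subset_iff)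
    also have "\<dots> = 2 * pi * min \<bar>x - y\<bar> (1 - \<bar>x - y\<bar>)"
      by (rule circ_dist_cis_turn) (use zw turn_bounds less_imp_le in auto)
    also have "\<dots> \<le> 2 * pi * \<bar>x - y\<bar>" by (intro mult_left_mono) auto
    finally show ?thesis by (simp add: divide_simps mult.commute)
  qed
  then have "real (card (turn`P)) \<le> (1 - 0) / (r / (2 * pi)) + 1"
    by (intro card_separated_real_le) (use assms turn_bounds in \<open>auto simp: less_imp_le\<close>)
  then show ?thesis using card_image[OF inj] by simp
qed

lemma lipschitz_wrt_funpow:
  assumes "lipschitz_wrt d X L g" "g ` X \<subseteq> X" "x \<in> X" "y \<in> X" "L \<ge> 0"
  shows "d ((g ^^ k) x) ((g ^^ k) y) \<le> L ^ k * d x y"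
proof (induction k)
  case (Suc k)
  have "(g ^^ k) x \<in> X" "(g ^^ k) y \<in> X"
    using assms(2-4) by (induction k) auto
  then have "d ((g ^^ Suc k) x) ((g ^^ Suc k) y) \<le> L * d ((g ^^ k) x) ((g ^^ k) y)"
    using assms(1) unfolding lipschitz_wrt_def by simp
  also have "\<dots> \<le> L * (L ^ k * d x y)" using Suc assms(5) by (rule mult_left_mono)
  finally show ?case by (simp add: mult.assoc)
qed simp

lemma funpow_homeomorphism_conj:
  assumes h: "homeomorphism X X h h'" and f: "f ` X \<subseteq> X" and "x \<in> X"
  shows "(f ^^ k) x = h' (((h \<circ> f \<circ> h') ^^ k) (h x))"
proof (induction k)
  case 0
  then show ?case using h \<open>x \<in> X\<close> by (simp add: homeomorphism_apply1)
next
  case (Suc k)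
  have "(f ^^ k) x \<in> X" using f \<open>x \<in> X\<close> by (induction k) auto
  then have "h' (h (f ((f ^^ k) x))) = f ((f ^^ k) x)"
    using h f by (auto simp: homeomorphism_apply1)
  then show ?case using Suc by simp
qed

lemma dist_less_if_circ_dist_less:
  assumes "\<eta> > 0"
  shows "\<exists>\<delta>>0. \<forall>a\<in>circle. \<forall>b\<in>circle. circ_dist a b < \<delta> \<longrightarrow> dist a b < \<eta>"
proof -
  have "isCont cis 0" unfolding isCont_def using tendsto_cis[OF tendsto_ident_at[of 0 UNIV]] by simp
  then obtain \<delta> where \<delta>: "\<delta> > 0" "\<And>x. dist x 0 < \<delta> \<Longrightarrow> dist (cis x) (cis 0) < \<eta>"
    using assms unfolding continuous_at_eps_delta by blast
  have "dist a b < \<eta>" if ab: "a \<in> circle" "b \<in> circle" "circ_dist a b < \<delta>" for a b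
  proof -
    have b: "b \<noteq> 0" "norm b = 1" using ab by (auto simp: mem_circle_iff)
    have "norm (a / b) = 1" using ab by (auto simp: mem_circle_iff norm_divide)
    moreover from this have "a / b \<noteq> 0" by auto
    ultimately have "cis (Arg (a / b)) = a / b" using cis_Arg[of "a/b"] by (simp add: sgn_div_norm)
    moreover have "dist (Arg (a / b)) 0 < \<delta>" using ab by (simp add: circ_dist_def dist_real_def)
    ultimately have "dist (a / b) 1 < \<eta>" using \<delta>(2) by fastforce
    moreover have "a / b - 1 = (a - b) / b" using b by (simp add: field_simps)
    ultimately show ?thesis using b by (simp add: dist_norm norm_divide)
  qed
  then show ?thesis using \<delta>(1) by blast
qed

lemma uniformly_continuous_circ_dist:
  assumes "continuous_on circle k" "k ` circle \<subseteq> circle" "e > 0"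
  shows "\<exists>\<delta>>0. \<forall>a\<in>circle. \<forall>b\<in>circle. circ_dist a b < \<delta> \<longrightarrow> circ_dist (k a) (k b) < e"
proof -
  obtain \<delta>1 where \<delta>1: "\<delta>1 > 0"
    "\<And>z w. z \<in> circle \<Longrightarrow> w \<in> circle \<Longrightarrow> dist z w < \<delta>1 \<Longrightarrow> circ_dist z w < e"
    using circ_dist_less_if_dist_less[OF assms(3)] by blast
  have "uniformly_continuous_on circle k"
    using assms(1) circle_param.compact_M compact_uniformly_continuous by blast
  then obtain \<delta>0 where \<delta>0: "\<delta>0 > 0"
    "\<And>a b. a \<in> circle \<Longrightarrow> b \<in> circle \<Longrightarrow> dist b a < \<delta>0 \<Longrightarrow> dist (k b) (k a) < \<delta>1"
    using \<delta>1(1) unfolding uniformly_continuous_on_def by metis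
  obtain \<delta> where \<delta>: "\<delta> > 0" "\<forall>a\<in>circle. \<forall>b\<in>circle. circ_dist a b < \<delta> \<longrightarrow> dist a b < \<delta>0"
    using dist_less_if_circ_dist_less[OF \<delta>0(1)] by blast
  have "circ_dist (k a) (k b) < e" if "a \<in> circle" "b \<in> circle" "circ_dist a b < \<delta>" for a b
  proof -
    have "k a \<in> circle" "k b \<in> circle" using assms(2) that by auto
    moreover have "dist (k a) (k b) < \<delta>1" using \<delta>(2) \<delta>0(2)[of b a] that by (auto simp: dist_commute)
    ultimately show ?thesis using \<delta>1(2) by blast
  qed
  then show ?thesis using \<delta>(1) by blast
qed

lemma separated_set_conj_separated:
  assumes h: "homeomorphism circle circle h h'" and f: "f ` circle \<subseteq> circle"
    and lip: "lipschitz_wrt circ_dist circle L (h \<circ> f \<circ> h')" and "L \<ge> 1"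
    and \<delta>: "\<And>a b. a \<in> circle \<Longrightarrow> b \<in> circle \<Longrightarrow> circ_dist a b < \<delta> \<Longrightarrow> circ_dist (h' a) (h' b) < e"
    and S: "separated_set circ_dist circle f n e S" and xy: "x \<in> S" "y \<in> S" "x \<noteq> y"
  shows "\<delta> / L ^ n \<le> circ_dist (h x) (h y)"
proof -
  define g where "g = h \<circ> f \<circ> h'"
  have image: "h ` circle = circle" "h' ` circle = circle"
    using h homeomorphism_image1 homeomorphism_image2 by blast+
  then have "g ` circle = h ` f ` circle" unfolding g_def image_comp[symmetric] by simp
  then have g_into: "g ` circle \<subseteq> circle" using image_mono[OF f, of h] image(1) by simp
  obtain k where k: "k < n" "circ_dist ((f ^^ k) x) ((f ^^ k) y) > e"
    using S xy unfolding separated_set_def by blast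
  have x: "x \<in> circle" "y \<in> circle" using xy S by (auto simp: separated_set_def)
  have "(g ^^ k) (h x) \<in> circle" "(g ^^ k) (h y) \<in> circle"
    using g_into image x by (induction k) auto
  moreover have "(f ^^ k) x = h' ((g ^^ k) (h x))" "(f ^^ k) y = h' ((g ^^ k) (h y))"
    unfolding g_def using funpow_homeomorphism_conj[OF h f] x by auto
  ultimately have "\<not> circ_dist ((g ^^ k) (h x)) ((g ^^ k) (h y)) < \<delta>"
    using \<delta> k(2) by fastforce
  then have "\<delta> \<le> circ_dist ((g ^^ k) (h x)) ((g ^^ k) (h y))" by simp
  also have "\<dots> \<le> L ^ k * circ_dist (h x) (h y)"
    by (rule lipschitz_wrt_funpow[OF lip[folded g_def] g_into]) (use image x \<open>L \<ge> 1\<close> in auto)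
  also have "\<dots> \<le> L ^ n * circ_dist (h x) (h y)"
    using \<open>L \<ge> 1\<close> k by (intro mult_right_mono power_increasing) (auto simp: circ_dist_nonneg)
  finally show ?thesis using \<open>L \<ge> 1\<close> by (simp add: divide_simps mult.commute)
qed

lemma card_separated_set_le:
  assumes f: "homeomorphism circle circle f f'" and "\<epsilon> > 0" "e > 0"
  shows "\<exists>C>0. \<forall>n S. separated_set circ_dist circle f n e S \<longrightarrow> real (card S) \<le> C * exp (\<epsilon> * real n)"
proof -
  obtain h h' where h: "homeomorphism circle circle h h'"
    and lip: "lipschitz_wrt circ_dist circle (exp \<epsilon>) (h \<circ> f \<circ> h')"
    using circle_homeomorphism_conj_lipschitz[OF f \<open>\<epsilon> > 0\<close>] by blast
  define L where "L = exp \<epsilon>"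
  have "L \<ge> 1" using \<open>\<epsilon> > 0\<close> by (simp add: L_def)
  have image: "h ` circle = circle" "h' ` circle = circle" "f ` circle = circle"
    using h f homeomorphism_image1 homeomorphism_image2 by blast+
  obtain \<delta> where \<delta>: "\<delta> > 0"
    "\<And>a b. a \<in> circle \<Longrightarrow> b \<in> circle \<Longrightarrow> circ_dist a b < \<delta> \<Longrightarrow> circ_dist (h' a) (h' b) < e"
    using uniformly_continuous_circ_dist[of h' e] h \<open>e > 0\<close> homeomorphism_cont2 image by (metis order_refl)
  have bound: "real (card S) \<le> (2 * pi / \<delta> + 1) * exp (\<epsilon> * real n)"
    if S: "separated_set circ_dist circle f n e S" for S n
  proof -
    have S_circle: "S \<subseteq> circle" "finite S" using S by (auto simp: separated_set_def)
    have "inj_on h S" using h S_circle by (metis homeomorphism_apply1 inj_on_inverseI subsetD)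
    have "real (card (h`S)) \<le> 2 * pi / (\<delta> / L ^ n) + 1"
      using separated_set_conj_separated[OF h _ lip[folded L_def] \<open>L \<ge> 1\<close> \<delta>(2) S]
        \<open>L \<ge> 1\<close> \<delta>(1) S_circle image_mono[OF S_circle(1), of h] image
      by (intro card_separated_circle_le) auto
    then have "real (card S) \<le> 2 * pi / \<delta> * L ^ n + 1" using card_image[OF \<open>inj_on h S\<close>] by simp
    also have "\<dots> \<le> (2 * pi / \<delta> + 1) * L ^ n" using \<open>L \<ge> 1\<close> by (simp add: algebra_simps)
    finally show ?thesis by (simp add: L_def exp_of_nat_mult[symmetric] mult.commute)
  qed
  then show ?thesis using \<delta>(1) by (intro exI[of _ "2 * pi / \<delta> + 1"]) (auto simp: add_pos_pos)
qed

lemma max_separated_bounds: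
  assumes f: "homeomorphism circle circle f f'" and "\<epsilon> > 0" "e > 0"
  shows "\<exists>C>0. \<forall>n. 1 \<le> max_separated circ_dist circle f n e \<and>
            real (max_separated circ_dist circle f n e) \<le> C * exp (\<epsilon> * real n)"
proof -
  obtain C where "C > 0" and bound:
    "\<And>n S. separated_set circ_dist circle f n e S \<Longrightarrow> real (card S) \<le> C * exp (\<epsilon> * real n)"
    using card_separated_set_le[OF assms] by blast
  have "1 \<le> max_separated circ_dist circle f n e \<and>
          real (max_separated circ_dist circle f n e) \<le> C * exp (\<epsilon> * real n)" for n
  proof -
    let ?P = "\<lambda>k. \<exists>S. separated_set circ_dist circle f n e S \<and> card S = k"
    have P1: "?P 1" by (intro exI[of _ "{1}"]) (auto simp: separated_set_def mem_circle_iff)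
    have P_bounded: "k \<le> nat \<lceil>C * exp (\<epsilon> * real n)\<rceil>" if "?P k" for k
    proof -
      have "real k \<le> C * exp (\<epsilon> * real n)" using that bound by blast
      then show ?thesis by linarith
    qed
    have "?P (Greatest ?P)" by (rule GreatestI_nat[where P = ?P, OF P1 P_bounded])
    then have "real (Greatest ?P) \<le> C * exp (\<epsilon> * real n)" using bound by metis
    moreover have "1 \<le> Greatest ?P" by (rule Greatest_le_nat[where P = ?P, OF P1 P_bounded])
    ultimately show ?thesis by (simp add: max_separated_def)
  qed
  then show ?thesis using \<open>C > 0\<close> by blast
qed

lemma limsup_ln_div_eq_0:
  fixes a :: "nat \<Rightarrow> real"
  assumes "\<And>\<epsilon>. \<epsilon> > 0 \<Longrightarrow> \<exists>C>0. \<forall>n. 1 \<le> a n \<and> a n \<le> C * exp (\<epsilon> * real n)"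
  shows "limsup (\<lambda>n. ereal (ln (a n) / real n)) = 0"
proof (rule antisym)
  show "limsup (\<lambda>n. ereal (ln (a n) / real n)) \<le> 0"
  proof (rule ereal_le_epsilon2)
    fix \<epsilon> :: real assume "0 < \<epsilon>"
    obtain C where C: "C > 0" "\<And>n. 1 \<le> a n \<and> a n \<le> C * exp (\<epsilon> * real n)"
      using assms[OF \<open>0 < \<epsilon>\<close>] by blast
    have bound: "ereal (ln (a n) / real n) \<le> ereal (ln C / real n + \<epsilon>)" if "n \<ge> 1" for n
    proof -
      have "ln (a n) \<le> ln (C * exp (\<epsilon> * real n))" using C(2)[of n] by (subst ln_le_cancel_iff) auto
      also have "\<dots> = ln C + \<epsilon> * real n" using C(1) by (simp add: ln_mult)
      finally have "ln (a n) / real n \<le> (ln C + \<epsilon> * real n) / real n"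
        using that by (intro divide_right_mono) auto
      also have "\<dots> = ln C / real n + \<epsilon>" using that by (simp add: field_simps)
      finally show ?thesis by simp
    qed
    have lim: "(\<lambda>n. ereal (ln C / real n + \<epsilon>)) \<longlonglongrightarrow> ereal (0 + \<epsilon>)"
      unfolding lim_ereal by (intro tendsto_intros)
    have "limsup (\<lambda>n. ereal (ln (a n) / real n)) \<le> limsup (\<lambda>n. ereal (ln C / real n + \<epsilon>))"
      using bound by (intro Limsup_mono) (auto simp: eventually_sequentially)
    also have "\<dots> = ereal \<epsilon>" using lim_imp_Limsup[OF _ lim] by simp
    finally show "limsup (\<lambda>n. ereal (ln (a n) / real n)) \<le> 0 + ereal \<epsilon>" by simp
  qed
  have "1 \<le> a n" for n using assms[of 1] by auto
  then show "0 \<le> limsup (\<lambda>n. ereal (ln (a n) / real n))"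
    by (intro le_Limsup always_eventually) auto
qed

theorem top_entropy_circle_homeomorphism:
  assumes f: "homeomorphism circle circle f f'"
  shows "top_entropy circ_dist circle f = 0"
proof -
  have "limsup (\<lambda>n. ereal (ln (real (max_separated circ_dist circle f n e)) / real n)) = 0"
    if "e > 0" for e
    by (rule limsup_ln_div_eq_0) (use max_separated_bounds[OF f _ that] in auto)
  then show ?thesis by (simp add: top_entropy_def)
qed

theorem mainTheorem2:
  shows "(\<forall>(G :: ('g, 'b) monoid_scheme) S M d (\<rho> :: 'g \<Rightarrow> complex \<Rightarrow> complex).
            group G \<and> finite S \<and> S \<subseteq> carrier G \<and> (\<forall>s\<in>S. inv\<^bsub>G\<^esub> s \<in> S)
            \<and> generate G S = carrier G
            \<and> cc_one_manifold M d
            \<and> (\<forall>g\<in>carrier G. \<exists>g'. homeomorphism M M (\<rho> g) g')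
            \<and> (\<forall>g\<in>carrier G. \<forall>h\<in>carrier G. \<forall>x\<in>M. \<rho> (g \<otimes>\<^bsub>G\<^esub> h) x = \<rho> g (\<rho> h x))
            \<and> (\<forall>x\<in>M. \<rho> \<one>\<^bsub>G\<^esub> x = x)
            \<and> (\<lambda>n. ln (real (card (word_ball G S n))) / real n) \<longlonglongrightarrow> 0
          \<longrightarrow> (\<forall>\<epsilon>>0. \<exists>h h'. homeomorphism M M h h' \<and>
                 (\<forall>s\<in>S. lipschitz_wrt d M (exp \<epsilon>) (h \<circ> \<rho> s \<circ> h'))))
       \<and> (\<forall>f f'. homeomorphism circle circle f f' \<longrightarrow>
            (\<forall>\<epsilon>>0. \<exists>h h'. homeomorphism circle circle h h' \<and>
                 lipschitz_wrt circ_dist circle (exp \<epsilon>) (h \<circ> f \<circ> h')))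
       \<and> (\<forall>f f'. homeomorphism circle circle f f' \<longrightarrow> top_entropy circ_dist circle f = 0)"
proof (intro conjI allI impI, goal_cases)
  case (1 G S M d \<rho> \<epsilon>)
  then have "symmetric_generating_set G S"
    by (intro symmetric_generating_set.intro symmetric_generating_set_axioms.intro) auto
  then show ?case by (rule subexponential_growth_conj_lipschitz) (use 1 in auto)
next
  case (2 f f' \<epsilon>)
  then show ?case by (rule circle_homeomorphism_conj_lipschitz)
next
  case (3 f f')
  then show ?case by (rule top_entropy_circle_homeomorphism)
qed

end
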